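(* Let $\sigma>0$, $T>0$, $Z$ a standard normal random variable, and $v=\exp(-\sigma^2T/2+\sigma\sqrt T Z)$ (so $\mathbb{E}[v]=1$). Let $0<L<1$ and let $\underline v=\underline v(T)$ satisfy $L=\mathbb{E}[v\mid v<\underline v]$. Consider the two-bidder auction: Alice bids knowing only the distribution of $v$; Bob observes $v$ (not Alice's bid) and bids; the highest bid wins and pays its bid (payoff $v$ minus bid) unless it is strictly below $L$, in which case the good is unsold; Bob wins ties, Bob can win with a bid equal to $L$, and a winning bid of Alice equal exactly to $L$ results in no sale. Let $\Pi_B(T)$ be Bob's expected profit in the equilibrium in which Bob bids $\beta_L(v)$ and Alice draws $v'$ independently from the distribution of $v$ and bids $\beta_L(v')$, where $\beta_L(x)=\mathbb{E}[v\mid v<x]$ for $x\ge\underline v$, $\beta_L(x)=L$ for $L<x<\underline v$, and $\beta_L(x)=0$ for $x\le L$. Write $s=\sigma\sqrt T$, $a_\pm=\frac{\ln\underline v}{s}\pm\frac{s}{2}$, $\ell_\pm=\frac{\ln L}{s}\pm\frac{s}{2}$, and $I_k=\int_{\ln\underline v}^\infty \phi\left(\frac{w}{s}+\frac{s}{2}\right)\Phi\left(\frac{w}{s}-\frac{s}{2}\right)w^k\,dw$ for $k=0,2$, where $\Phi,\phi$ are the standard normal CDF and PDF. Then $$\Pi_B(T)=1-\Phi(a_-)\Phi(a_+)-\frac{2}{s}I_0+\Phi(a_-)\Phi(\ell_+)-\Phi(a_+)\Phi(\ell_-),$$ and, taking into account that $\underline v$ depends on $T$, $$\begin{aligned}\Pi_B'(T)&=\Phi(a_-)\frac{\sigma}{\sqrt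 T}\left(\frac{\phi(\ell_+)}{2}+\frac{1}{s}a_-\phi(a_+)\right)+\frac{\sigma\,\underline v\,\phi(a_+)}{2\sqrt T(\underline v-L)}\left(L\Phi(\ell_+)-\Phi(\ell_-)\right)\\&\quad+\frac{1}{2\sqrt2}\frac{\sigma e^{-\sigma^2T/4}}{\sqrt{2\pi}\sqrt T}\left(\frac{\sqrt2}{s}\phi\left(\frac{\sqrt2\ln\underline v}{s}\right)+1-\Phi\left(\frac{\sqrt2\ln\underline v}{s}\right)\right)\\&\quad+\frac{\sigma}{\sqrt T}\left(\frac{1}{\sigma^2T}+\frac14\right)I_0-\frac{\sigma}{\sqrt T}\frac{1}{(\sigma^2T)^2}I_2.\end{aligned}$$
   Context: This models a token whose price follows driftless geometric Brownian motion $dp_t/p_t=\sigma dB_t$ with $p_0=1$; Alice bids at time $0$, Bob at time $T$, and the value to the winner is $v=p_T$. Bidders are risk neutral. *)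

theory Defs
  imports "HOL-Probability.Probability"
begin

definition stdN :: "real measure" where
  "stdN = density lborel std_normal_density"

definition phi :: "real \<Rightarrow> real" where
  "phi x = std_normal_density x"

definition Phi :: "real \<Rightarrow> real" where
  "Phi x = measure stdN {..x}"

definition vT :: "real \<Rightarrow> real \<Rightarrow> real \<Rightarrow> real" where
  "vT \<sigma> T z = exp (- \<sigma>\<^sup>2 * T / 2 + \<sigma> * sqrt T * z)"

definition cond_mean :: "real \<Rightarrow> real \<Rightarrow> real \<Rightarrow> real" where
  "cond_mean \<sigma> T x =
     (\<integral>z. (if vT \<sigma> T z < x then vT \<sigma> T z else 0) \<partial>stdN)
       / measure stdN {z. vT \<sigma> T z < x}"

definition vlow :: "real \<Rightarrow> real \<Rightarrow> real \<Rightarrow> real" where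
  "vlow \<sigma> L T = (THE x. 0 < x \<and> cond_mean \<sigma> T x = L)"

definition betaL :: "real \<Rightarrow> real \<Rightarrow> real \<Rightarrow> real \<Rightarrow> real" where
  "betaL \<sigma> L T x =
     (if x \<le> L then 0
      else if x < vlow \<sigma> L T then L
      else cond_mean \<sigma> T x)"

definition PiB :: "real \<Rightarrow> real \<Rightarrow> real \<Rightarrow> real" where
  "PiB \<sigma> L T =
     (\<integral>zz. (let b = betaL \<sigma> L T (vT \<sigma> T (fst zz));
                 a = betaL \<sigma> L T (vT \<sigma> T (snd zz))
             in if L \<le> b \<and> a \<le> b then vT \<sigma> T (fst zz) - b else 0)
        \<partial>(stdN \<Otimes>\<^sub>M stdN))"

definition Ik :: "real \<Rightarrow> real \<Rightarrow> nat \<Rightarrow> real" where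
  "Ik s vb k = set_lebesgue_integral lborel {ln vb..} (\<lambda>w. phi (w / s + s / 2) * Phi (w / s - s / 2) * w ^ k)"

end

(*
  Write s = sigma * sqrt T and v = exp (s z - s^2/2) for the normal draw z.  Exponential tilting,
  exp (s z - s^2/2) phi z = phi (z - s), turns every expectation of v into a Gaussian integral:
  E[v | v < x] becomes Phi (z - s) / Phi z at the corresponding z, the threshold vbar corresponds to
  the z solving Phi (z - s) = L Phi z, and once Alice's draw is integrated out, Bob's profit is
  explicit up to K(s, a) = int_a^oo phi z Phi (z - s) dz = I_0 / s.

  For the derivative, the threshold is differentiated implicitly and K along its moving lower limit
  under the integral sign.  Since phi z phi (z - s) is again Gaussian in z, the resulting integrals
  are explicit; I_2 enters only through (1/s^2 + 1/4) I_0 - I_2 / s^4, which equals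
  (1/s) int_a^oo phi z Phi (z - s) (1 + s z - z^2) dz and has an explicit antiderivative.
*)
theory Submission
  imports Defs "HOL-Real_Asymp.Real_Asymp"
begin

section \<open>The standard normal density and distribution function\<close>

lemma phi_altdef: "phi x = exp (- (x\<^sup>2) / 2) / sqrt (2 * pi)"
  by (simp add: phi_def std_normal_density_def)

lemma phi_pos: "0 < phi x"
  by (simp add: phi_altdef)

lemma phi_le_1: "phi x \<le> 1"
proof -
  have "phi x \<le> 1 / sqrt (2 * pi)"
    unfolding phi_altdef by (simp add: divide_right_mono)
  also have "\<dots> \<le> 1"
    using pi_gt3 by simp
  finally show ?thesis .
qed

lemma borel_measurable_phi [measurable]: "phi \<in> borel_measurable borel"
  unfolding phi_def by measurable

lemma DERIV_phi: "(phi has_real_derivative - x * phi x) (at x)"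
  unfolding phi_altdef[abs_def] by (auto intro!: derivative_eq_intros simp: field_simps)

lemma DERIV_phi_comp [derivative_intros]:
  "(g has_real_derivative g') (at x within A) \<Longrightarrow>
     ((\<lambda>x. phi (g x)) has_real_derivative - g x * phi (g x) * g') (at x within A)"
  by (rule DERIV_chain2[OF DERIV_phi])

lemma isCont_phi_comp [continuous_intros]: "isCont g x \<Longrightarrow> isCont (\<lambda>x. phi (g x)) x"
  using DERIV_phi DERIV_isCont isCont_o2 by blast

lemma phi_at_top: "(phi \<longlongrightarrow> 0) at_top"
  unfolding phi_altdef[abs_def] by real_asymp

lemma integrable_phi_shift: "integrable lborel (\<lambda>z. phi (z - c))"
proof -
  have "phi (z - c) = normal_density c 1 z" for z
    by (simp add: phi_def normal_density_def)
  then show ?thesis by simp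
qed

lemma integrable_phi: "integrable lborel phi"
  using integrable_phi_shift[of 0] by simp

lemma phi_tilt: "exp (s * z - s\<^sup>2 / 2) * phi z = phi (z - s)"
  unfolding phi_altdef by (simp add: exp_add[symmetric] power2_eq_square field_simps)

text \<open>The convolution \<open>\<integral> phi z * phi (z - s) dz\<close>, i.e.\ the \<open>N(0, 2)\<close> density at \<open>s\<close>.\<close>
definition phi_conv :: "real \<Rightarrow> real" where
  "phi_conv s = exp (- (s\<^sup>2) / 4) / (2 * sqrt pi)"

lemma phi_mult_phi_shift: "phi z * phi (z - s) = phi_conv s * sqrt 2 * phi (sqrt 2 * (z - s / 2))"
proof -
  have "- (z\<^sup>2) / 2 + - ((z - s)\<^sup>2) / 2 = - (s\<^sup>2) / 4 + - ((sqrt 2 * (z - s / 2))\<^sup>2) / 2"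
    by (simp add: power_mult_distrib power2_eq_square field_simps)
  then have "exp (- (z\<^sup>2) / 2) * exp (- ((z - s)\<^sup>2) / 2)
      = exp (- (s\<^sup>2) / 4) * exp (- ((sqrt 2 * (z - s / 2))\<^sup>2) / 2)"
    by (simp add: exp_add[symmetric])
  moreover have "sqrt (2 * pi) = sqrt 2 * sqrt pi"
    by (simp add: real_sqrt_mult)
  ultimately show ?thesis
    unfolding phi_altdef phi_conv_def by (simp add: field_simps)
qed

lemma prob_space_stdN: "prob_space stdN"
  unfolding stdN_def by (rule prob_space_normal_density) simp

lemma sets_stdN [measurable_cong, simp]: "sets stdN = sets borel"
  by (simp add: stdN_def)

lemma space_stdN [simp]: "space stdN = UNIV"
  by (simp add: stdN_def)

lemma real_distribution_stdN: "real_distribution stdN"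
  using prob_space_stdN by (simp add: real_distribution_def real_distribution_axioms_def)

lemma Phi_eq_cdf: "Phi = cdf stdN"
  by (simp add: Phi_def[abs_def] cdf_def)

lemma integrable_stdN_iff:
  "f \<in> borel_measurable borel \<Longrightarrow> integrable stdN f \<longleftrightarrow> integrable lborel (\<lambda>x. phi x * f x)"
  unfolding stdN_def phi_def by (subst integrable_density) auto

lemma integral_stdN:
  "f \<in> borel_measurable borel \<Longrightarrow> integral\<^sup>L stdN f = (\<integral>x. phi x * f x \<partial>lborel)"
  unfolding stdN_def phi_def by (subst integral_density) auto

lemma measure_stdN: "A \<in> sets borel \<Longrightarrow> measure stdN A = (LINT x:A|lborel. phi x)"
  using integral_stdN[of "indicator A"] by (simp add: set_lebesgue_integral_def mult.commute)

lemma Phi_diff: "a \<le> b \<Longrightarrow> Phi b - Phi a = integral {a..b} phi"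
proof -
  assume "a \<le> b"
  interpret real_distribution stdN
    by (rule real_distribution_stdN)
  have "Phi b - Phi a = measure stdN {a<..b}"
    using \<open>a \<le> b\<close> by (cases "a = b") (auto simp: Phi_eq_cdf intro: cdf_diff_eq)
  also have "\<dots> = (LINT x:{a<..b}|lborel. phi x)"
    by (rule measure_stdN) simp
  also have "\<dots> = integral {a<..b} phi"
    using integrable_mult_indicator[of "{a<..b}" lborel phi] integrable_phi
    by (intro set_borel_integral_eq_integral) (auto simp: set_integrable_def)
  also have "\<dots> = integral {a..b} phi"
    by (rule integral_spike_set) (auto intro: negligible_subset[of "{a}"])
  finally show ?thesis .
qed

lemma DERIV_Phi: "(Phi has_real_derivative phi x) (at x)"
proof -
  have "((\<lambda>y. integral {x - 1..y} phi) has_real_derivative phi x) (at x within {x - 1..x + 1})"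
    by (rule integral_has_real_derivative)
       (auto intro: continuous_at_imp_continuous_on isCont_phi_comp[OF continuous_ident])
  then have "((\<lambda>y. Phi (x - 1) + integral {x - 1..y} phi) has_real_derivative phi x) (at x)"
    by (auto simp: at_within_Icc_at intro!: derivative_eq_intros)
  moreover have "\<forall>\<^sub>F y in nhds x. Phi y = Phi (x - 1) + integral {x - 1..y} phi"
    using eventually_nhds_in_open[of "{x - 1<..}" x]
    by (auto elim!: eventually_mono simp: Phi_diff[symmetric])
  ultimately show ?thesis
    by (subst DERIV_cong_ev[OF refl _ refl])
qed

lemma DERIV_Phi_comp [derivative_intros]:
  "(g has_real_derivative g') (at x within A) \<Longrightarrow>
     ((\<lambda>x. Phi (g x)) has_real_derivative phi (g x) * g') (at x within A)"
  by (rule DERIV_chain2[OF DERIV_Phi])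

lemma isCont_Phi_comp [continuous_intros]: "isCont g x \<Longrightarrow> isCont (\<lambda>x. Phi (g x)) x"
  using DERIV_Phi DERIV_isCont isCont_o2 by blast

lemma continuous_on_Phi: "continuous_on A Phi"
  by (simp add: continuous_at_imp_continuous_on isCont_Phi_comp)

lemma borel_measurable_Phi [measurable]: "Phi \<in> borel_measurable borel"
  by (intro borel_measurable_continuous_onI continuous_on_Phi)

lemma Phi_strict_mono: "a < b \<Longrightarrow> Phi a < Phi b"
  by (rule DERIV_pos_imp_increasing) (use DERIV_Phi phi_pos in blast)+

lemma Phi_less_iff [simp]: "Phi a < Phi b \<longleftrightarrow> a < b"
  using Phi_strict_mono[of a b] Phi_strict_mono[of b a] by (cases a b rule: linorder_cases) auto

lemma Phi_le_iff [simp]: "Phi a \<le> Phi b \<longleftrightarrow> a \<le> b"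
  by (meson Phi_less_iff linorder_not_le)

lemma Phi_eq_iff [simp]: "Phi a = Phi b \<longleftrightarrow> a = b"
  by (metis Phi_less_iff linorder_neq_iff)

lemma Phi_nonneg: "0 \<le> Phi x"
  unfolding Phi_def by simp

lemma Phi_le_1: "Phi x \<le> 1"
  using real_distribution.cdf_bounded_prob[OF real_distribution_stdN] by (simp add: Phi_eq_cdf)

lemma Phi_pos: "0 < Phi x"
  using Phi_nonneg[of "x - 1"] Phi_strict_mono[of "x - 1" x] by linarith

lemma Phi_at_top: "(Phi \<longlongrightarrow> 1) at_top"
  using real_distribution.cdf_lim_at_top_prob[OF real_distribution_stdN] by (simp add: Phi_eq_cdf)

lemma Phi_at_bot: "(Phi \<longlongrightarrow> 0) at_bot"
  using finite_borel_measure.cdf_lim_at_bot[OF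
      real_distribution.finite_borel_measure_M[OF real_distribution_stdN]]
  by (simp add: Phi_eq_cdf)

lemma Phi_affine_at_top: "c > 0 \<Longrightarrow> ((\<lambda>z. Phi (c * z + d)) \<longlongrightarrow> 1) at_top"
  by (rule filterlim_compose[OF Phi_at_top]) real_asymp

lemma Phi_shift_at_top: "((\<lambda>z. Phi (z - s)) \<longlongrightarrow> 1) at_top"
  using Phi_affine_at_top[of 1 "- s"] by simp

section \<open>Integrals over half-lines\<close>

lemma set_integrable_dominated:
  fixes f g :: "'a \<Rightarrow> real"
  assumes "integrable M g" "f \<in> borel_measurable M" "S \<in> sets M" "\<And>x. x \<in> S \<Longrightarrow> \<bar>f x\<bar> \<le> g x"
  shows "set_integrable M S f"
  unfolding set_integrable_def
proof (rule Bochner_Integration.integrable_bound[OF assms(1)])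
  show "(\<lambda>x. indicator S x *\<^sub>R f x) \<in> borel_measurable M"
    using assms(2,3) by measurable
  show "AE x in M. norm (indicator S x *\<^sub>R f x) \<le> norm (g x)"
    using assms(4) by (intro AE_I2) (force simp: indicator_def intro: order_trans[OF _ abs_ge_self])
qed

lemma set_integral_atLeast_FTC:
  fixes f F :: "real \<Rightarrow> real"
  assumes der: "\<And>x. a \<le> x \<Longrightarrow> (F has_real_derivative f x) (at x)"
    and cont: "\<And>x. a \<le> x \<Longrightarrow> isCont f x"
    and int: "set_integrable lborel {a..} f"
    and lim: "(F \<longlongrightarrow> l) at_top"
  shows "(LINT x:{a..}|lborel. f x) = l - F a"
proof -
  have int': "set_integrable lborel (einterval a \<infinity>) f"
    by (rule set_integrable_subset[OF int]) auto
  have "(LBINT x=ereal a..\<infinity>. f x) = l - F a"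
  proof (rule interval_integral_FTC_integrable)
    show "((F \<circ> real_of_ereal) \<longlongrightarrow> F a) (at_right (ereal a))"
      unfolding ereal_tendsto_simps1
      by (metis DERIV_isCont der isCont_def filterlim_at_split order_refl)
    show "((F \<circ> real_of_ereal) \<longlongrightarrow> l) (at_left \<infinity>)"
      unfolding ereal_tendsto_simps1 by (rule lim)
  qed (use int' der cont in \<open>auto simp: has_real_derivative_iff_has_vector_derivative[symmetric]\<close>)
  moreover have "(LINT x:{a..}|lborel. f x) = (LINT x:{a<..}|lborel. f x)"
    using int int'
    by (intro set_integral_cong_set eventually_mono[OF AE_lborel_singleton[of a]])
       (auto simp: set_integrable_def set_borel_measurable_def)
  ultimately show ?thesis
    by (simp add: interval_integral_to_infinity_eq)
qed

lemma set_integral_lessThan_FTC: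
  fixes f F :: "real \<Rightarrow> real"
  assumes der: "\<And>x. x \<le> a \<Longrightarrow> (F has_real_derivative f x) (at x)"
    and cont: "\<And>x. x \<le> a \<Longrightarrow> isCont f x"
    and int: "set_integrable lborel {..<a} f"
    and lim: "(F \<longlongrightarrow> l) at_bot"
  shows "(LINT x:{..<a}|lborel. f x) = F a - l"
proof -
  have "einterval (-\<infinity>) a = {..<a}"
    by (auto simp: einterval_def)
  moreover have "(LBINT x=-\<infinity>..ereal a. f x) = F a - l"
  proof (rule interval_integral_FTC_integrable)
    show "((F \<circ> real_of_ereal) \<longlongrightarrow> F a) (at_left (ereal a))"
      unfolding ereal_tendsto_simps1
      by (metis DERIV_isCont der isCont_def filterlim_at_split order_refl)
    show "((F \<circ> real_of_ereal) \<longlongrightarrow> l) (at_right (-\<infinity>))"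
      unfolding ereal_tendsto_simps1 by (rule lim)
  qed (use int der cont in \<open>auto simp: einterval_def lessThan_def
         has_real_derivative_iff_has_vector_derivative[symmetric]\<close>)
  ultimately show ?thesis
    by (simp add: interval_lebesgue_integral_def)
qed

lemma set_integral_greaterThanLessThan_FTC:
  fixes f F :: "real \<Rightarrow> real"
  assumes "a \<le> b"
    and "\<And>x. a \<le> x \<Longrightarrow> x \<le> b \<Longrightarrow> (F has_real_derivative f x) (at x)"
    and "\<And>x. a \<le> x \<Longrightarrow> x \<le> b \<Longrightarrow> isCont f x"
  shows "(LINT x:{a<..<b}|lborel. f x) = F b - F a"
proof -
  have "(LINT x:{a<..<b}|lborel. f x) = (LBINT x=ereal a..ereal b. f x)"
    using assms(1) by (simp add: interval_integral_Ioo)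
  also have "\<dots> = F b - F a"
    using assms
    by (intro interval_integral_FTC_finite)
       (auto simp: has_real_derivative_iff_has_vector_derivative[symmetric] min_def max_def
             intro: continuous_at_imp_continuous_on has_field_derivative_at_within)
  finally show ?thesis .
qed

lemma set_integrable_phi_shift_mult:
  assumes "f \<in> borel_measurable borel" "S \<in> sets borel" "\<And>z. \<bar>f z\<bar> \<le> 1"
  shows "set_integrable lborel S (\<lambda>z. phi (z - c) * f z)"
proof (rule set_integrable_dominated[OF integrable_phi_shift[of c]])
  show "\<bar>phi (z - c) * f z\<bar> \<le> phi (z - c)" for z
    using phi_pos[of "z - c"] assms(3)[of z] by (simp add: abs_mult mult_left_le)
qed (use assms in auto)

lemma set_integrable_phi_mult_quadratic:
  assumes "f \<in> borel_measurable borel" "S \<in> sets borel"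
    and "\<And>z. \<bar>f z\<bar> \<le> A + B * \<bar>z\<bar> + C * z\<^sup>2"
  shows "set_integrable lborel S (\<lambda>z. phi z * f z)"
proof (rule set_integrable_dominated)
  have "integrable lborel (\<lambda>z. phi z * \<bar>z\<bar> ^ k)" for k
    unfolding phi_def by (rule integrable_std_normal_moment_abs)
  from this[of 0] this[of 1] this[of 2]
  have "integrable lborel (\<lambda>z. A * (phi z * \<bar>z\<bar> ^ 0) + B * (phi z * \<bar>z\<bar> ^ 1) + C * (phi z * \<bar>z\<bar> ^ 2))"
    by auto
  then show "integrable lborel (\<lambda>z. phi z * (A + B * \<bar>z\<bar> + C * z\<^sup>2))"
    by (simp add: algebra_simps)
  show "\<bar>phi z * f z\<bar> \<le> phi z * (A + B * \<bar>z\<bar> + C * z\<^sup>2)" for z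
    using phi_pos[of z] assms(3)[of z] by (simp add: abs_mult)
qed (use assms in auto)

lemma set_integral_phi_shift_lessThan: "(LINT z:{..<t}|lborel. phi (z - c)) = Phi (t - c)"
proof -
  have "(LINT z:{..<t}|lborel. phi (z - c)) = Phi (t - c) - 0"
  proof (rule set_integral_lessThan_FTC)
    show "((\<lambda>z. Phi (z - c)) \<longlongrightarrow> 0) at_bot"
      by (rule filterlim_compose[OF Phi_at_bot]) real_asymp
    show "set_integrable lborel {..<t} (\<lambda>z. phi (z - c))"
      using set_integrable_phi_shift_mult[of "\<lambda>_. 1"] by simp
  qed (auto intro!: derivative_eq_intros continuous_intros)
  then show ?thesis
    by simp
qed

lemma Phi_lessThan: "measure stdN {..<t} = Phi t"
  using set_integral_phi_shift_lessThan[of t 0] by (simp add: measure_stdN)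

section \<open>The truncated lognormal mean and the threshold\<close>

definition trunc_mean :: "real \<Rightarrow> real \<Rightarrow> real" where
  "trunc_mean s z = Phi (z - s) / Phi z"

lemma Phi_shift_less_tilt:
  assumes "s > 0"
  shows "Phi (t - s) < exp (s * t - s\<^sup>2 / 2) * Phi t"
proof -
  let ?h = "\<lambda>t. exp (s * t - s\<^sup>2 / 2) * Phi t - Phi (t - s)"
  have "0 < ?h t"
  proof (rule DERIV_pos_imp_increasing_at_bot[where f = ?h])
    fix x assume "x \<le> t"
    have "(?h has_real_derivative
        s * exp (s * x - s\<^sup>2 / 2) * Phi x + exp (s * x - s\<^sup>2 / 2) * phi x - phi (x - s)) (at x)"
      by (auto intro!: derivative_eq_intros)
    moreover have "s * exp (s * x - s\<^sup>2 / 2) * Phi x + exp (s * x - s\<^sup>2 / 2) * phi x - phi (x - s)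
        = s * exp (s * x - s\<^sup>2 / 2) * Phi x"
      using phi_tilt[of s x] by simp
    ultimately show "\<exists>y. (?h has_real_derivative y) (at x) \<and> 0 < y"
      using assms Phi_pos[of x] by auto
  next
    have "((\<lambda>t. exp (s * t - s\<^sup>2 / 2)) \<longlongrightarrow> 0) at_bot"
      using assms by real_asymp
    moreover have "((\<lambda>t. Phi (t - s)) \<longlongrightarrow> 0) at_bot"
      by (rule filterlim_compose[OF Phi_at_bot]) real_asymp
    ultimately show "(?h \<longlongrightarrow> 0) at_bot"
      using tendsto_diff[OF tendsto_mult[OF _ Phi_at_bot]] by fastforce
  qed
  then show ?thesis
    by simp
qed

lemma trunc_mean_pos: "0 < trunc_mean s z"
  unfolding trunc_mean_def using Phi_pos by simp

lemma trunc_mean_less_1: "s > 0 \<Longrightarrow> trunc_mean s z < 1"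
  unfolding trunc_mean_def using Phi_pos[of z] by (simp add: divide_less_eq)

lemma trunc_mean_less_tilt: "s > 0 \<Longrightarrow> trunc_mean s z < exp (s * z - s\<^sup>2 / 2)"
  unfolding trunc_mean_def using Phi_shift_less_tilt[of s z] Phi_pos[of z]
  by (simp add: divide_less_eq)

lemma borel_measurable_trunc_mean [measurable]: "trunc_mean s \<in> borel_measurable borel"
  unfolding trunc_mean_def[abs_def] by measurable

lemma DERIV_trunc_mean:
  "(trunc_mean s has_real_derivative (phi (z - s) * Phi z - Phi (z - s) * phi z) / (Phi z)\<^sup>2) (at z)"
  unfolding trunc_mean_def[abs_def] using Phi_pos[of z]
  by (auto intro!: derivative_eq_intros simp: power2_eq_square)

lemma isCont_trunc_mean: "isCont (trunc_mean s) z"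
  using DERIV_trunc_mean DERIV_isCont by blast

lemma trunc_mean_strict_mono:
  assumes "s > 0" "a < b"
  shows "trunc_mean s a < trunc_mean s b"
proof (rule DERIV_pos_imp_increasing[OF \<open>a < b\<close>])
  fix x
  have "phi (x - s) * Phi x - Phi (x - s) * phi x = phi x * (exp (s * x - s\<^sup>2 / 2) * Phi x - Phi (x - s))"
    using phi_tilt[of s x] by (simp add: algebra_simps)
  also have "\<dots> > 0"
    using Phi_shift_less_tilt[OF \<open>s > 0\<close>, of x] phi_pos[of x] by simp
  finally show "\<exists>y. (trunc_mean s has_real_derivative y) (at x) \<and> 0 < y"
    using DERIV_trunc_mean Phi_pos[of x] by fastforce
qed

lemma trunc_mean_less_iff: "s > 0 \<Longrightarrow> trunc_mean s a < trunc_mean s b \<longleftrightarrow> a < b"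
  by (metis linorder_neq_iff order.asym trunc_mean_strict_mono)

lemma trunc_mean_le_iff: "s > 0 \<Longrightarrow> trunc_mean s a \<le> trunc_mean s b \<longleftrightarrow> a \<le> b"
  by (meson linorder_not_le trunc_mean_less_iff)

lemma trunc_mean_at_top: "(trunc_mean s \<longlongrightarrow> 1) at_top"
  unfolding trunc_mean_def[abs_def] using tendsto_divide[OF Phi_shift_at_top Phi_at_top] by simp

definition zlow :: "real \<Rightarrow> real \<Rightarrow> real" where
  "zlow L s = (THE z. trunc_mean s z = L)"

lemma exp_tilt_ln: "(s :: real) > 0 \<Longrightarrow> 0 < L \<Longrightarrow> exp (s * (ln L / s + s / 2) - s\<^sup>2 / 2) = L"
  by (simp add: field_simps power2_eq_square)

lemma trunc_mean_at_ln_less: "s > 0 \<Longrightarrow> 0 < L \<Longrightarrow> trunc_mean s (ln L / s + s / 2) < L"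
  using trunc_mean_less_tilt[of s "ln L / s + s / 2"] by (simp add: exp_tilt_ln)

lemma phi_ln_shift: "s > 0 \<Longrightarrow> 0 < L \<Longrightarrow> phi (ln L / s + s / 2 - s) = L * phi (ln L / s + s / 2)"
  using phi_tilt[of s "ln L / s + s / 2"] by (simp add: exp_tilt_ln)

lemma trunc_mean_surj:
  assumes "s > 0" "0 < L" "L < 1"
  shows "\<exists>z. trunc_mean s z = L"
proof -
  define lp where "lp = ln L / s + s / 2"
  obtain N where N: "\<And>z. z \<ge> N \<Longrightarrow> trunc_mean s z > L"
    using order_tendstoD(1)[OF trunc_mean_at_top \<open>L < 1\<close>]
    by (auto simp: eventually_at_top_linorder)
  have "trunc_mean s lp < L" "trunc_mean s (max N lp) > L"
    using trunc_mean_at_ln_less[of s L] N assms by (simp_all add: lp_def)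
  then have "\<exists>z. lp \<le> z \<and> z \<le> max N lp \<and> trunc_mean s z = L"
    by (intro IVT') (auto intro: continuous_at_imp_continuous_on isCont_trunc_mean)
  then show ?thesis
    by blast
qed

lemma trunc_mean_zlow:
  assumes "s > 0" "0 < L" "L < 1"
  shows "trunc_mean s (zlow L s) = L"
  unfolding zlow_def
  by (rule theI') (use trunc_mean_surj[OF assms] trunc_mean_less_iff[OF \<open>s > 0\<close>] in
      \<open>metis linorder_neq_iff order.irrefl\<close>)

lemma zlow_unique:
  assumes "s > 0" "0 < L" "L < 1" "trunc_mean s z = L"
  shows "z = zlow L s"
  using trunc_mean_zlow[OF assms(1-3)] assms(4) trunc_mean_less_iff[OF assms(1)]
  by (metis linorder_neq_iff order.irrefl)

lemma Phi_zlow_shift: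
  assumes "s > 0" "0 < L" "L < 1"
  shows "Phi (zlow L s - s) = L * Phi (zlow L s)"
  using trunc_mean_zlow[OF assms] Phi_pos[of "zlow L s"] by (simp add: trunc_mean_def field_simps)

lemma ln_less_zlow:
  assumes "s > 0" "0 < L" "L < 1"
  shows "ln L / s + s / 2 < zlow L s"
  using trunc_mean_at_ln_less[of s L] trunc_mean_zlow[OF assms] trunc_mean_less_iff[OF \<open>s > 0\<close>] assms
  by metis

section \<open>Differentiability of the threshold\<close>

definition PhiInv :: "real \<Rightarrow> real" where
  "PhiInv y = (THE x. Phi x = y)"

lemma Phi_surj:
  assumes "0 < y" "y < 1"
  shows "\<exists>x. Phi x = y"
proof -
  obtain a where "Phi a < y"
    using order_tendstoD(2)[OF Phi_at_bot \<open>0 < y\<close>] by (auto simp: eventually_at_bot_linorder)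
  moreover obtain b where "Phi b > y"
    using order_tendstoD(1)[OF Phi_at_top \<open>y < 1\<close>] by (auto simp: eventually_at_top_linorder)
  moreover have "a \<le> b"
    using calculation by (metis Phi_le_iff less_imp_le less_trans)
  ultimately show ?thesis
    using IVT'[of Phi a y b] continuous_on_Phi by auto
qed

lemma Phi_PhiInv:
  assumes "0 < y" "y < 1"
  shows "Phi (PhiInv y) = y"
proof -
  obtain x where "Phi x = y"
    using Phi_surj[OF assms] by blast
  moreover have "PhiInv y = x"
    unfolding PhiInv_def by (rule the_equality) (use \<open>Phi x = y\<close> in auto)
  ultimately show ?thesis
    by simp
qed

lemma PhiInv_Phi: "PhiInv (Phi x) = x"
  unfolding PhiInv_def by (rule the_equality) auto

lemma DERIV_PhiInv:
  assumes "0 < y" "y < 1"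
  shows "(PhiInv has_real_derivative inverse (phi (PhiInv y))) (at y)"
proof (rule DERIV_inverse_function[where f = Phi and a = 0 and b = 1])
  show "phi (PhiInv y) \<noteq> 0"
    using phi_pos by (simp add: less_imp_neq[symmetric])
  have "isCont PhiInv (Phi (PhiInv y))"
    by (rule isCont_inverse_function[where d = 1])
       (auto simp: PhiInv_Phi intro: isCont_Phi_comp[OF continuous_ident])
  then show "isCont PhiInv y"
    using Phi_PhiInv[OF assms] by simp
  show "(Phi has_real_derivative phi (PhiInv y)) (at (PhiInv y))"
    by (rule DERIV_Phi)
  show "\<And>z. 0 < z \<Longrightarrow> z < 1 \<Longrightarrow> Phi (PhiInv z) = z"
    by (rule Phi_PhiInv)
qed (use assms in auto)

text \<open>Solving \<open>Phi (z - s) = L * Phi z\<close> for \<open>s\<close> inverts \<open>s \<mapsto> zlow L s\<close>.\<close>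
definition zlow_inv :: "real \<Rightarrow> real \<Rightarrow> real" where
  "zlow_inv L z = z - PhiInv (L * Phi z)"

lemma L_mult_Phi_bounds:
  assumes "0 < L" "L < 1"
  shows "0 < L * Phi z" "L * Phi z < Phi z" "L * Phi z < 1"
proof -
  show "0 < L * Phi z" "L * Phi z < Phi z"
    using assms Phi_pos[of z] by auto
  then show "L * Phi z < 1"
    using Phi_le_1[of z] by linarith
qed

lemma DERIV_zlow_inv:
  assumes "0 < L" "L < 1"
  shows "(zlow_inv L has_real_derivative 1 - L * phi z / phi (PhiInv (L * Phi z))) (at z)"
proof -
  have "((\<lambda>z. PhiInv (L * Phi z)) has_real_derivative
      inverse (phi (PhiInv (L * Phi z))) * (L * phi z)) (at z)"
    using L_mult_Phi_bounds[OF assms]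
    by (intro DERIV_chain2[OF DERIV_PhiInv]) (auto intro!: derivative_eq_intros)
  then show ?thesis
    unfolding zlow_inv_def[abs_def] by (auto intro!: derivative_eq_intros simp: field_simps)
qed

lemma zlow_inv_pos:
  assumes "0 < L" "L < 1"
  shows "zlow_inv L z > 0"
proof -
  have "Phi (PhiInv (L * Phi z)) < Phi z"
    using Phi_PhiInv[of "L * Phi z"] L_mult_Phi_bounds[OF assms, of z] by simp
  then show ?thesis
    unfolding Phi_less_iff zlow_inv_def by simp
qed

lemma trunc_mean_eq_iff_zlow_inv:
  assumes "0 < L" "L < 1"
  shows "trunc_mean s z = L \<longleftrightarrow> s = zlow_inv L z"
proof -
  have "trunc_mean s z = L \<longleftrightarrow> Phi (z - s) = Phi (PhiInv (L * Phi z))"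
    using Phi_pos[of z] Phi_PhiInv L_mult_Phi_bounds[OF assms, of z]
    by (auto simp: trunc_mean_def field_simps)
  also have "\<dots> \<longleftrightarrow> s = zlow_inv L z"
    by (auto simp: zlow_inv_def)
  finally show ?thesis .
qed

lemma zlow_inv_zlow:
  assumes "s > 0" "0 < L" "L < 1"
  shows "zlow_inv L (zlow L s) = s"
  using trunc_mean_zlow[OF assms] trunc_mean_eq_iff_zlow_inv[OF assms(2,3)] by simp

lemma zlow_zlow_inv:
  assumes "0 < L" "L < 1"
  shows "zlow L (zlow_inv L z) = z"
  using zlow_unique[OF zlow_inv_pos[OF assms] assms] trunc_mean_eq_iff_zlow_inv[OF assms] by simp

lemma isCont_zlow:
  assumes "s > 0" "0 < L" "L < 1"
  shows "isCont (zlow L) s"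
proof -
  have "isCont (zlow L) (zlow_inv L (zlow L s))"
    by (rule isCont_inverse_function[where d = 1])
       (auto simp: zlow_zlow_inv[OF assms(2,3)] intro: DERIV_isCont[OF DERIV_zlow_inv[OF assms(2,3)]])
  then show ?thesis
    using zlow_inv_zlow[OF assms] by simp
qed

definition vlow_s :: "real \<Rightarrow> real \<Rightarrow> real" where
  "vlow_s L s = exp (s * zlow L s - s\<^sup>2 / 2)"

lemma vlow_s_gt_L:
  assumes "s > 0" "0 < L" "L < 1"
  shows "vlow_s L s > L"
  using trunc_mean_less_tilt[OF \<open>s > 0\<close>, of "zlow L s"] trunc_mean_zlow[OF assms]
  by (simp add: vlow_s_def)

lemma phi_zlow_shift: "phi (zlow L s - s) = vlow_s L s * phi (zlow L s)"
  using phi_tilt[of s "zlow L s"] by (simp add: vlow_s_def)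

lemma isCont_vlow_s:
  assumes "s > 0" "0 < L" "L < 1"
  shows "isCont (vlow_s L) s"
  unfolding vlow_s_def[abs_def]
  by (intro continuous_intros isCont_o2[OF isCont_zlow[OF assms]] isCont_zlow[OF assms]) auto

lemma DERIV_zlow:
  assumes "s > 0" "0 < L" "L < 1"
  shows "(zlow L has_real_derivative vlow_s L s / (vlow_s L s - L)) (at s)"
proof -
  define z where "z = zlow L s"
  define v where "v = vlow_s L s"
  have PhiInv_eq: "PhiInv (L * Phi z) = z - s"
    using Phi_zlow_shift[OF assms] by (metis PhiInv_Phi z_def)
  have phi_eq: "phi (z - s) = v * phi z"
    using phi_zlow_shift by (simp add: v_def z_def)
  have "1 - L * phi z / phi (PhiInv (L * Phi z)) = (v - L) / v"
    unfolding PhiInv_eq phi_eq using phi_pos[of z] vlow_s_gt_L[OF assms] assms(2)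
    by (simp add: v_def field_simps)
  then have "(zlow_inv L has_real_derivative (v - L) / v) (at (zlow L s))"
    using DERIV_zlow_inv[OF assms(2,3), of z] by (simp add: z_def)
  then have "(zlow L has_real_derivative inverse ((v - L) / v)) (at s)"
  proof (rule DERIV_inverse_function[where a = 0 and b = "s + 1"])
    show "(v - L) / v \<noteq> 0"
      using vlow_s_gt_L[OF assms] assms(2) by (simp add: v_def)
    show "zlow_inv L (zlow L y) = y" if "0 < y" "y < s + 1" for y
      using zlow_inv_zlow[OF that(1) assms(2,3)] .
    show "isCont (zlow L) s"
      by (rule isCont_zlow[OF assms])
  qed (use assms in auto)
  then show ?thesis
    by (simp add: v_def)
qed

section \<open>The equilibrium in the coordinates of the normal draw\<close>

lemma vT_eq_tilt: "T \<ge> 0 \<Longrightarrow> vT \<sigma> T z = exp (\<sigma> * sqrt T * z - (\<sigma> * sqrt T)\<^sup>2 / 2)"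
  by (simp add: vT_def power_mult_distrib algebra_simps)

lemma borel_measurable_vT [measurable]: "vT \<sigma> T \<in> borel_measurable borel"
  unfolding vT_def[abs_def] by measurable

lemma exp_tilt_less_iff:
  fixes s x z :: real
  assumes "s > 0" "x > 0"
  shows "exp (s * z - s\<^sup>2 / 2) < x \<longleftrightarrow> z < ln x / s + s / 2"
proof -
  have "exp (s * z - s\<^sup>2 / 2) < x \<longleftrightarrow> s * z - s\<^sup>2 / 2 < ln x"
    using assms(2) exp_less_cancel_iff[of "s * z - s\<^sup>2 / 2" "ln x"] by simp
  also have "\<dots> \<longleftrightarrow> z < ln x / s + s / 2"
    using assms(1) by (simp add: field_simps power2_eq_square)
  finally show ?thesis .
qed

lemma exp_tilt_le_iff:
  fixes s x z :: real
  assumes "s > 0" "x > 0"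
  shows "exp (s * z - s\<^sup>2 / 2) \<le> x \<longleftrightarrow> z \<le> ln x / s + s / 2"
proof -
  have "exp (s * z - s\<^sup>2 / 2) \<le> x \<longleftrightarrow> s * z - s\<^sup>2 / 2 \<le> ln x"
    using assms(2) exp_le_cancel_iff[of "s * z - s\<^sup>2 / 2" "ln x"] by simp
  also have "\<dots> \<longleftrightarrow> z \<le> ln x / s + s / 2"
    using assms(1) by (simp add: field_simps power2_eq_square)
  finally show ?thesis .
qed

lemma tilt_exponent_div: "(s :: real) > 0 \<Longrightarrow> (s * z - s\<^sup>2 / 2) / s + s / 2 = z"
  by (simp add: field_simps power2_eq_square)

lemma cond_mean_eq_trunc_mean:
  assumes "\<sigma> > 0" "T > 0" "x > 0"
  shows "cond_mean \<sigma> T x = trunc_mean (\<sigma> * sqrt T) (ln x / (\<sigma> * sqrt T) + \<sigma> * sqrt T / 2)"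
proof -
  define s where "s = \<sigma> * sqrt T"
  define t where "t = ln x / s + s / 2"
  have s: "s > 0"
    using assms by (simp add: s_def)
  have v: "vT \<sigma> T z = exp (s * z - s\<^sup>2 / 2)" for z
    using assms by (simp add: vT_eq_tilt s_def)
  have below: "exp (s * z - s\<^sup>2 / 2) < x \<longleftrightarrow> z < t" for z
    unfolding t_def using exp_tilt_less_iff[OF s \<open>x > 0\<close>] .
  have "(\<integral>z. (if vT \<sigma> T z < x then vT \<sigma> T z else 0) \<partial>stdN)
      = (\<integral>z. phi z * (if vT \<sigma> T z < x then vT \<sigma> T z else 0) \<partial>lborel)"
    by (rule integral_stdN) measurable
  also have "\<dots> = (LINT z:{..<t}|lborel. phi (z - s))"
    unfolding set_lebesgue_integral_def
  proof (rule Bochner_Integration.integral_cong[OF refl])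
    show "phi z * (if vT \<sigma> T z < x then vT \<sigma> T z else 0) = indicator {..<t} z *\<^sub>R phi (z - s)" for z
      using phi_tilt[of s z] by (simp add: v below indicator_def mult.commute)
  qed
  also have "\<dots> = Phi (t - s)"
    by (rule set_integral_phi_shift_lessThan)
  moreover have "{z. vT \<sigma> T z < x} = {..<t}"
    using below by (auto simp: v)
  ultimately show ?thesis
    unfolding cond_mean_def by (simp add: Phi_lessThan trunc_mean_def t_def s_def)
qed

lemma vlow_eq_vlow_s:
  assumes "\<sigma> > 0" "T > 0" "0 < L" "L < 1"
  shows "vlow \<sigma> L T = vlow_s L (\<sigma> * sqrt T)"
proof -
  define s where "s = \<sigma> * sqrt T"
  have s: "s > 0"
    using assms by (simp add: s_def)
  have cm: "cond_mean \<sigma> T x = trunc_mean s (ln x / s + s / 2)" if "x > 0" for x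
    using cond_mean_eq_trunc_mean[OF assms(1,2) that] by (simp add: s_def)
  have "vlow \<sigma> L T = vlow_s L s"
    unfolding vlow_def
  proof (rule the_equality)
    show "0 < vlow_s L s \<and> cond_mean \<sigma> T (vlow_s L s) = L"
      using trunc_mean_zlow[OF s assms(3,4)] by (simp add: cm vlow_s_def tilt_exponent_div[OF s])
    fix x
    assume "0 < x \<and> cond_mean \<sigma> T x = L"
    then have "x > 0" "ln x / s + s / 2 = zlow L s"
      using zlow_unique[OF s assms(3,4)] by (auto simp: cm)
    then have "ln x = s * zlow L s - s\<^sup>2 / 2"
      using s by (auto simp: field_simps power2_eq_square)
    then show "x = vlow_s L s"
      using \<open>x > 0\<close> by (metis exp_ln vlow_s_def)
  qed
  then show ?thesis
    by (simp add: s_def)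
qed

lemma betaL_vT:
  assumes "\<sigma> > 0" "T > 0" "0 < L" "L < 1"
  defines "s \<equiv> \<sigma> * sqrt T"
  shows "betaL \<sigma> L T (vT \<sigma> T z) =
    (if z \<le> ln L / s + s / 2 then 0 else if z < zlow L s then L else trunc_mean s z)"
proof -
  have s: "s > 0"
    using assms by (simp add: s_def)
  have v: "vT \<sigma> T z = exp (s * z - s\<^sup>2 / 2)"
    using assms by (simp add: vT_eq_tilt s_def)
  have "vT \<sigma> T z < vlow \<sigma> L T \<longleftrightarrow> z < zlow L s"
    unfolding v vlow_eq_vlow_s[OF assms(1-4)] vlow_s_def s_def[symmetric] using s by simp
  moreover have "cond_mean \<sigma> T (vT \<sigma> T z) = trunc_mean s z"
    using cond_mean_eq_trunc_mean[OF assms(1,2), of "vT \<sigma> T z"]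
    unfolding s_def[symmetric] v by (simp add: tilt_exponent_div[OF s])
  ultimately show ?thesis
    unfolding betaL_def using exp_tilt_le_iff[OF s \<open>0 < L\<close>] by (simp add: v)
qed

section \<open>Bob's expected profit\<close>

text \<open>Bob wins with the pooling bid \<open>L\<close> iff Alice's draw is at most \<open>zlow\<close>, and with a
  separating bid iff her draw is at most his.\<close>
lemma payoff_eq:
  assumes "\<sigma> > 0" "T > 0" "0 < L" "L < 1"
  defines "s \<equiv> \<sigma> * sqrt T"
  defines "a \<equiv> zlow L s" and "lp \<equiv> ln L / s + s / 2"
  shows "(let b = betaL \<sigma> L T (vT \<sigma> T z); b' = betaL \<sigma> L T (vT \<sigma> T z')
          in if L \<le> b \<and> b' \<le> b then vT \<sigma> T z - b else 0)
       = indicator {lp<..<a} z * (exp (s * z - s\<^sup>2 / 2) - L) * indicator {..a} z'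
       + indicator {a..} z * (exp (s * z - s\<^sup>2 / 2) - trunc_mean s z) * indicator {..z} z'"
proof -
  have s: "s > 0"
    using assms by (simp add: s_def)
  have v: "vT \<sigma> T y = exp (s * y - s\<^sup>2 / 2)" for y
    using assms by (simp add: vT_eq_tilt s_def)
  have "lp < a"
    using ln_less_zlow[OF s assms(3,4)] by (simp add: lp_def a_def)
  have b: "betaL \<sigma> L T (vT \<sigma> T y) = (if y \<le> lp then 0 else if y < a then L else trunc_mean s y)" for y
    using betaL_vT[OF assms(1-4)] by (simp add: s_def a_def lp_def)
  have "trunc_mean s a = L"
    using trunc_mean_zlow[OF s assms(3,4)] by (simp add: a_def)
  then have compare_L: "trunc_mean s y \<le> L \<longleftrightarrow> y \<le> a" "L \<le> trunc_mean s y \<longleftrightarrow> a \<le> y"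
      "trunc_mean s y < L \<longleftrightarrow> y < a" "L < trunc_mean s y \<longleftrightarrow> a < y" for y
    using trunc_mean_le_iff[OF s] trunc_mean_less_iff[OF s] by metis+
  show ?thesis
    unfolding Let_def b using \<open>lp < a\<close> \<open>0 < L\<close> less_imp_le[OF trunc_mean_pos[of s]]
    by (auto simp: v indicator_def compare_L trunc_mean_le_iff[OF s] trunc_mean_less_iff[OF s]
        dest: order.strict_trans[OF trunc_mean_pos])
qed

lemma integral_stdN_pair_indicator:
  fixes A B h :: "real \<Rightarrow> real"
  assumes [measurable]: "A \<in> borel_measurable borel" "B \<in> borel_measurable borel"
    and "integrable stdN h" "\<And>x. \<bar>A x\<bar> \<le> h x" "\<And>x. \<bar>B x\<bar> \<le> h x"
  shows "(\<integral>p. A (fst p) * indicator {..c} (snd p) + B (fst p) * indicator {..fst p} (snd p)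
            \<partial>(stdN \<Otimes>\<^sub>M stdN))
       = (\<integral>x. A x * Phi c + B x * Phi x \<partial>stdN)"
proof -
  interpret P: prob_space stdN
    by (rule prob_space_stdN)
  interpret pair_sigma_finite stdN stdN
    by (simp add: pair_sigma_finite_def P.sigma_finite_measure_axioms)
  have [measurable]: "Measurable.pred (borel \<Otimes>\<^sub>M borel) (\<lambda>p::real \<times> real. snd p \<in> {..fst p})"
    unfolding atMost_iff by measurable
  let ?f = "\<lambda>p. A (fst p) * indicator {..c} (snd p) + B (fst p) * indicator {..fst p} (snd p)"
  have "integrable (stdN \<Otimes>\<^sub>M stdN) (\<lambda>p. 2 * h (fst p))"
    using assms(3) by (intro Fubini_integrable) (auto simp: abs_mult)
  then have "integrable (stdN \<Otimes>\<^sub>M stdN) ?f"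
  proof (rule Bochner_Integration.integrable_bound)
    show "AE p in stdN \<Otimes>\<^sub>M stdN. norm (?f p) \<le> norm (2 * h (fst p))"
    proof (intro AE_I2)
      fix p :: "real \<times> real"
      have "\<bar>?f p\<bar> \<le> \<bar>A (fst p)\<bar> + \<bar>B (fst p)\<bar>"
        by (auto simp: indicator_def)
      then show "norm (?f p) \<le> norm (2 * h (fst p))"
        using assms(4,5)[of "fst p"] by simp
    qed
  qed measurable
  moreover have "(\<integral>y. ?f (x, y) \<partial>stdN) = A x * Phi c + B x * Phi x" for x
  proof -
    have "integrable stdN (indicator {..d} :: real \<Rightarrow> real)" for d
      by (intro integrable_real_indicator) (auto simp: less_top[symmetric])
    then show ?thesis
      by (simp add: Phi_def)
  qed
  ultimately show ?thesis
    by (simp add: integral_fst'[symmetric])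
qed

definition tail_phi_Phi :: "real \<Rightarrow> real \<Rightarrow> real" where
  "tail_phi_Phi s a = (LINT z:{a..}|lborel. phi z * Phi (z - s))"

lemma set_integrable_phi_Phi_shift: "S \<in> sets borel \<Longrightarrow> set_integrable lborel S (\<lambda>z. phi z * Phi (z - s))"
  using set_integrable_phi_shift_mult[of "\<lambda>z. Phi (z - s)" S 0] Phi_nonneg Phi_le_1 by simp

lemma set_integral_phi_shift_diff:
  assumes "lp \<le> a"
  shows "(LINT x:{lp<..<a}|lborel. phi (x - s) - L * phi x)
       = (Phi (a - s) - L * Phi a) - (Phi (lp - s) - L * Phi lp)"
  using assms by (intro set_integral_greaterThanLessThan_FTC) (auto intro!: derivative_eq_intros continuous_intros)

lemma set_integral_deriv_Phi_mult_Phi_shift: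
  "(LINT x:{a..}|lborel. phi (x - s) * Phi x + phi x * Phi (x - s)) = 1 - Phi (a - s) * Phi a"
proof -
  have "(LINT x:{a..}|lborel. phi (x - s) * Phi x + phi x * Phi (x - s)) = 1 * 1 - Phi (a - s) * Phi a"
  proof (rule set_integral_atLeast_FTC)
    show "set_integrable lborel {a..} (\<lambda>x. phi (x - s) * Phi x + phi x * Phi (x - s))"
      using set_integrable_phi_shift_mult[of Phi "{a..}" s] Phi_nonneg Phi_le_1
        set_integrable_phi_Phi_shift[of "{a..}" s] by simp
    show "((\<lambda>x. Phi (x - s) * Phi x) \<longlongrightarrow> 1 * 1) at_top"
      by (intro tendsto_mult Phi_at_top Phi_shift_at_top)
  qed (auto intro!: derivative_eq_intros continuous_intros simp: algebra_simps)
  then show ?thesis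
    by simp
qed

lemma integral_stdN_profit_density:
  assumes "s > 0" "lp \<le> a"
  shows "(\<integral>x. indicator {lp<..<a} x * (exp (s * x - s\<^sup>2 / 2) - L) * Phi a
              + indicator {a..} x * (exp (s * x - s\<^sup>2 / 2) - trunc_mean s x) * Phi x \<partial>stdN)
       = Phi a * ((Phi (a - s) - L * Phi a) - (Phi (lp - s) - L * Phi lp))
         + (1 - Phi (a - s) * Phi a) - 2 * tail_phi_Phi s a"
proof -
  have pointwise: "phi x * (indicator {lp<..<a} x * (exp (s * x - s\<^sup>2 / 2) - L) * Phi a
        + indicator {a..} x * (exp (s * x - s\<^sup>2 / 2) - trunc_mean s x) * Phi x)
      = Phi a * (indicator {lp<..<a} x *\<^sub>R (phi (x - s) - L * phi x))
        + (indicator {a..} x *\<^sub>R (phi (x - s) * Phi x + phi x * Phi (x - s))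
           - 2 * (indicator {a..} x *\<^sub>R (phi x * Phi (x - s))))" for x
    using phi_tilt[of s x] Phi_pos[of x]
    by (auto simp: indicator_def trunc_mean_def algebra_simps)
  have "set_integrable lborel {lp<..<a} (\<lambda>x. phi (x - c))" for c
    using set_integrable_phi_shift_mult[of "\<lambda>_. 1" "{lp<..<a}"] by simp
  from this[of s] this[of 0]
  have int1: "set_integrable lborel {lp<..<a} (\<lambda>x. phi (x - s) - L * phi x)"
    by (intro set_integral_diff(1) set_integrable_mult_right) auto
  have int2: "set_integrable lborel {a..} (\<lambda>x. phi (x - s) * Phi x + phi x * Phi (x - s))"
    and int3: "set_integrable lborel {a..} (\<lambda>x. phi x * Phi (x - s))"
    using set_integrable_phi_shift_mult[of Phi "{a..}" s] Phi_nonneg Phi_le_1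
      set_integrable_phi_Phi_shift[of "{a..}" s] by simp_all
  have "(\<integral>x. indicator {lp<..<a} x * (exp (s * x - s\<^sup>2 / 2) - L) * Phi a
              + indicator {a..} x * (exp (s * x - s\<^sup>2 / 2) - trunc_mean s x) * Phi x \<partial>stdN)
      = Phi a * (LINT x:{lp<..<a}|lborel. phi (x - s) - L * phi x)
        + ((LINT x:{a..}|lborel. phi (x - s) * Phi x + phi x * Phi (x - s))
           - 2 * (LINT x:{a..}|lborel. phi x * Phi (x - s)))"
    using int1 int2 int3 unfolding set_integrable_def set_lebesgue_integral_def
    by (subst integral_stdN, measurable) (simp add: pointwise)
  then show ?thesis
    using assms(2) by (simp add: set_integral_phi_shift_diff set_integral_deriv_Phi_mult_Phi_shift
      tail_phi_Phi_def)
qed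

lemma PiB_closed_form:
  assumes "\<sigma> > 0" "T > 0" "0 < L" "L < 1"
  defines "s \<equiv> \<sigma> * sqrt T"
  defines "a \<equiv> zlow L s" and "lp \<equiv> ln L / s + s / 2"
  shows "PiB \<sigma> L T = 1 - Phi (a - s) * Phi a - 2 * tail_phi_Phi s a
                      + Phi (a - s) * Phi lp - Phi a * Phi (lp - s)"
proof -
  have s: "s > 0"
    using assms by (simp add: s_def)
  have "phi x * (exp (s * x - s\<^sup>2 / 2) + 1) = phi (x - s) + phi x" for x
    using phi_tilt[of s x] by (simp add: algebra_simps)
  then have "integrable stdN (\<lambda>x. exp (s * x - s\<^sup>2 / 2) + 1)"
    using integrable_phi_shift[of s] integrable_phi by (subst integrable_stdN_iff) auto
  moreover have "\<bar>indicator {lp<..<a} x * (exp (s * x - s\<^sup>2 / 2) - L)\<bar> \<le> exp (s * x - s\<^sup>2 / 2) + 1"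
    for x
    using assms(3,4) by (simp add: indicator_def abs_le_iff)
      (use exp_gt_zero[of "s * x - s\<^sup>2 / 2"] in linarith)
  moreover have "\<bar>indicator {a..} x * (exp (s * x - s\<^sup>2 / 2) - trunc_mean s x)\<bar>
      \<le> exp (s * x - s\<^sup>2 / 2) + 1" for x
    using trunc_mean_pos[of s x] trunc_mean_less_1[OF s, of x] by (simp add: indicator_def abs_le_iff)
      (use exp_gt_zero[of "s * x - s\<^sup>2 / 2"] in linarith)
  ultimately have "PiB \<sigma> L T = (\<integral>x. indicator {lp<..<a} x * (exp (s * x - s\<^sup>2 / 2) - L) * Phi a
              + indicator {a..} x * (exp (s * x - s\<^sup>2 / 2) - trunc_mean s x) * Phi x \<partial>stdN)"
    unfolding PiB_def payoff_eq[OF assms(1-4)] s_def[symmetric] a_def[symmetric] lp_def[symmetric]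
    by (subst integral_stdN_pair_indicator[symmetric]) (auto simp: mult.assoc)
  also have "\<dots> = Phi a * ((Phi (a - s) - L * Phi a) - (Phi (lp - s) - L * Phi lp))
         + (1 - Phi (a - s) * Phi a) - 2 * tail_phi_Phi s a"
    using ln_less_zlow[OF s assms(3,4)]
    by (intro integral_stdN_profit_density[OF s]) (simp add: a_def lp_def)
  finally show ?thesis
    using Phi_zlow_shift[OF s assms(3,4)] by (simp add: a_def algebra_simps)
qed

definition profit_s :: "real \<Rightarrow> real \<Rightarrow> real" where
  "profit_s L s = 1 - Phi (zlow L s - s) * Phi (zlow L s) - 2 * tail_phi_Phi s (zlow L s)
     + Phi (zlow L s - s) * Phi (ln L / s + s / 2) - Phi (zlow L s) * Phi (ln L / s + s / 2 - s)"

lemma PiB_eq_profit_s: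
  assumes "\<sigma> > 0" "T > 0" "0 < L" "L < 1"
  shows "PiB \<sigma> L T = profit_s L (\<sigma> * sqrt T)"
  using PiB_closed_form[OF assms] by (simp add: profit_s_def)

section \<open>The integrals \<open>I\<^sub>k\<close>\<close>

lemma set_integral_atLeast_affine:
  fixes f :: "real \<Rightarrow> real"
  assumes "c > 0"
  shows "(LINT w:{t + c * a..}|lborel. f w) = c * (LINT z:{a..}|lborel. f (t + c * z))"
  unfolding set_lebesgue_integral_def
  using assms by (subst lborel_integral_real_affine[where c = c and t = t]) (auto simp: indicator_def)

lemma set_integral_atLeast_shift:
  fixes g :: "real \<Rightarrow> real"
  shows "(LINT z:{a..}|lborel. g z) = (\<integral>y. indicator {0..} y * g (a + y) \<partial>lborel)"
  using set_integral_atLeast_affine[of 1 a 0 g] by (simp add: set_lebesgue_integral_def)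

lemma Ik_eq_tail_moment:
  assumes "s > 0"
  shows "Ik s (exp (s * a - s\<^sup>2 / 2)) k
       = s * (LINT z:{a..}|lborel. phi z * Phi (z - s) * (s * z - s\<^sup>2 / 2) ^ k)"
proof -
  have arg: "(s * z - s\<^sup>2 / 2) / s + s / 2 = z" "(s * z - s\<^sup>2 / 2) / s - s / 2 = z - s"
    and exponent: "- (s\<^sup>2 / 2) + s * z = s * z - s\<^sup>2 / 2" for z
    using assms by (simp_all add: field_simps power2_eq_square)
  have "Ik s (exp (s * a - s\<^sup>2 / 2)) k
      = (LINT w:{- (s\<^sup>2 / 2) + s * a..}|lborel. phi (w / s + s / 2) * Phi (w / s - s / 2) * w ^ k)"
    by (simp add: Ik_def)
  also have "\<dots> = s * (LINT z:{a..}|lborel. phi ((- (s\<^sup>2 / 2) + s * z) / s + s / 2)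
      * Phi ((- (s\<^sup>2 / 2) + s * z) / s - s / 2) * (- (s\<^sup>2 / 2) + s * z) ^ k)"
    by (rule set_integral_atLeast_affine[OF assms])
  finally show ?thesis
    by (simp only: exponent arg)
qed

lemma set_integral_phi_mult_phi_shift:
  "(LINT z:{a..}|lborel. phi z * phi (z - s)) = phi_conv s * (1 - Phi (sqrt 2 * (a - s / 2)))"
proof -
  have "(LINT z:{a..}|lborel. phi z * phi (z - s)) = phi_conv s * 1 - phi_conv s * Phi (sqrt 2 * (a - s / 2))"
  proof (rule set_integral_atLeast_FTC)
    show "set_integrable lborel {a..} (\<lambda>z. phi z * phi (z - s))"
      using set_integrable_phi_shift_mult[of "\<lambda>z. phi (z - s)" "{a..}" 0] phi_pos phi_le_1
      by (simp add: less_imp_le)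
    show "((\<lambda>z. phi_conv s * Phi (sqrt 2 * (z - s / 2))) \<longlongrightarrow> phi_conv s * 1) at_top"
      using Phi_affine_at_top[of "sqrt 2" "- sqrt 2 * s / 2"]
      by (intro tendsto_mult_left) (simp add: algebra_simps)
  qed (auto intro!: derivative_eq_intros continuous_intros simp: phi_mult_phi_shift)
  then show ?thesis
    by (simp add: algebra_simps)
qed

lemma set_integrable_deriv_phi_mult_Phi_shift:
  "set_integrable lborel {a..} (\<lambda>z. phi z * (- z * Phi (z - s) + phi (z - s)))"
proof (rule set_integrable_phi_mult_quadratic[where A = 1 and B = 1 and C = 0])
  show "\<bar>- z * Phi (z - s) + phi (z - s)\<bar> \<le> 1 + 1 * \<bar>z\<bar> + 0 * z\<^sup>2" for z
  proof -
    have "\<bar>- z * Phi (z - s) + phi (z - s)\<bar> \<le> \<bar>z\<bar> * Phi (z - s) + phi (z - s)"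
      using abs_triangle_ineq[of "- z * Phi (z - s)" "phi (z - s)"] Phi_nonneg[of "z - s"]
        phi_pos[of "z - s"] by (simp add: abs_mult)
    then show ?thesis
      using mult_left_le[OF Phi_le_1[of "z - s"], of "\<bar>z\<bar>"] phi_le_1[of "z - s"] by simp
  qed
qed auto

lemma set_integral_deriv_phi_mult_Phi_shift:
  "(LINT z:{a..}|lborel. phi z * (- z * Phi (z - s) + phi (z - s))) = - (phi a * Phi (a - s))"
proof -
  have "(LINT z:{a..}|lborel. phi z * (- z * Phi (z - s) + phi (z - s))) = 0 - phi a * Phi (a - s)"
  proof (rule set_integral_atLeast_FTC)
    show "set_integrable lborel {a..} (\<lambda>z. phi z * (- z * Phi (z - s) + phi (z - s)))"
      by (rule set_integrable_deriv_phi_mult_Phi_shift)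
    show "((\<lambda>z. phi z * Phi (z - s)) \<longlongrightarrow> 0) at_top"
      using tendsto_mult[OF phi_at_top Phi_shift_at_top] by simp
  qed (auto intro!: derivative_eq_intros continuous_intros simp: algebra_simps)
  then show ?thesis
    by simp
qed

text \<open>Differentiating the first summand produces \<open>(z - s) * phi z * phi (z - s)\<close>, which the
  Gaussian second summand cancels.\<close>
lemma DERIV_quadratic_tail_antiderivative:
  "((\<lambda>z. (z - s) * phi z * Phi (z - s)
        + phi_conv s * (phi (sqrt 2 * (z - s / 2)) / sqrt 2 + s / 2 * Phi (sqrt 2 * (z - s / 2))))
     has_real_derivative phi x * Phi (x - s) * (1 + s * x - x\<^sup>2)) (at x)"
proof -
  have sqrt2: "sqrt 2 * (sqrt 2 * y) = 2 * y" for y :: real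
    by (simp add: mult.assoc[symmetric])
  have "((\<lambda>z. (z - s) * phi z * Phi (z - s)
         + phi_conv s * (phi (sqrt 2 * (z - s / 2)) / sqrt 2 + s / 2 * Phi (sqrt 2 * (z - s / 2))))
     has_real_derivative phi x * Phi (x - s) * (1 + s * x - x\<^sup>2)
       + (x - s) * (phi x * phi (x - s) - phi_conv s * sqrt 2 * phi (sqrt 2 * (x - s / 2)))) (at x)"
    by (auto intro!: derivative_eq_intros simp: field_simps power2_eq_square sqrt2)
  then show ?thesis
    by (simp add: phi_mult_phi_shift)
qed

lemma set_integral_phi_Phi_shift_quadratic:
  "(LINT z:{a..}|lborel. phi z * Phi (z - s) * (1 + s * z - z\<^sup>2))
     = phi_conv s * (s / 2) - ((a - s) * phi a * Phi (a - s)
         + phi_conv s * (phi (sqrt 2 * (a - s / 2)) / sqrt 2 + s / 2 * Phi (sqrt 2 * (a - s / 2))))"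
proof (rule set_integral_atLeast_FTC)
  fix x
  show "((\<lambda>z. (z - s) * phi z * Phi (z - s)
         + phi_conv s * (phi (sqrt 2 * (z - s / 2)) / sqrt 2 + s / 2 * Phi (sqrt 2 * (z - s / 2))))
     has_real_derivative phi x * Phi (x - s) * (1 + s * x - x\<^sup>2)) (at x)"
    by (rule DERIV_quadratic_tail_antiderivative)
  show "isCont (\<lambda>z. phi z * Phi (z - s) * (1 + s * z - z\<^sup>2)) x"
    by (intro continuous_intros)
next
  have bound: "\<bar>Phi (z - s) * (1 + s * z - z\<^sup>2)\<bar> \<le> 1 + \<bar>s\<bar> * \<bar>z\<bar> + 1 * z\<^sup>2" for z
  proof -
    have "\<bar>1 + s * z - z\<^sup>2\<bar> \<le> 1 + \<bar>s * z\<bar> + z\<^sup>2"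
      unfolding abs_le_iff using abs_ge_self[of "s * z"] abs_ge_minus_self[of "s * z"] zero_le_power2[of z]
      by (intro conjI; linarith)
    moreover have "\<bar>Phi (z - s) * (1 + s * z - z\<^sup>2)\<bar> \<le> \<bar>1 + s * z - z\<^sup>2\<bar>"
      using Phi_nonneg[of "z - s"] Phi_le_1[of "z - s"] by (simp add: abs_mult mult_left_le_one_le)
    ultimately show ?thesis
      by (simp add: abs_mult)
  qed
  show "set_integrable lborel {a..} (\<lambda>z. phi z * Phi (z - s) * (1 + s * z - z\<^sup>2))"
    unfolding mult.assoc by (rule set_integrable_phi_mult_quadratic[OF _ _ bound]) auto
next
  have "((\<lambda>z. (z - s) * phi z) \<longlongrightarrow> 0) at_top"
    unfolding phi_altdef by real_asymp
  moreover have "((\<lambda>z. phi (sqrt 2 * (z - s / 2))) \<longlongrightarrow> 0) at_top"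
    unfolding phi_altdef by real_asymp
  moreover have "((\<lambda>z. Phi (sqrt 2 * (z - s / 2))) \<longlongrightarrow> 1) at_top"
    using Phi_affine_at_top[of "sqrt 2" "- sqrt 2 * s / 2"] by (simp add: algebra_simps)
  ultimately have "((\<lambda>z. (z - s) * phi z * Phi (z - s)
         + phi_conv s * (phi (sqrt 2 * (z - s / 2)) / sqrt 2 + s / 2 * Phi (sqrt 2 * (z - s / 2))))
     \<longlongrightarrow> 0 * 1 + phi_conv s * (0 / sqrt 2 + s / 2 * 1)) at_top"
    by (intro tendsto_intros Phi_shift_at_top) auto
  then show "((\<lambda>z. (z - s) * phi z * Phi (z - s)
         + phi_conv s * (phi (sqrt 2 * (z - s / 2)) / sqrt 2 + s / 2 * Phi (sqrt 2 * (z - s / 2))))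
     \<longlongrightarrow> phi_conv s * (s / 2)) at_top"
    by simp
qed

lemma Ik_combination:
  assumes "s > 0"
  shows "(1 / s\<^sup>2 + 1 / 4) * Ik s (exp (s * a - s\<^sup>2 / 2)) 0
           - (1 / s\<^sup>2)\<^sup>2 * Ik s (exp (s * a - s\<^sup>2 / 2)) 2
         = 1 / s * (LINT z:{a..}|lborel. phi z * Phi (z - s) * (1 + s * z - z\<^sup>2))"
proof -
  have int0: "set_integrable lborel {a..} (\<lambda>z. phi z * Phi (z - s) * (s * z - s\<^sup>2 / 2) ^ 0)"
    using set_integrable_phi_Phi_shift[of "{a..}" s] by simp
  have bound: "\<bar>Phi (z - s) * (s * z - s\<^sup>2 / 2)\<^sup>2\<bar> \<le> s\<^sup>2 * s\<^sup>2 / 2 + 0 * \<bar>z\<bar> + 2 * s\<^sup>2 * z\<^sup>2" for z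
  proof -
    have "(s * z - s\<^sup>2 / 2)\<^sup>2 \<le> s\<^sup>2 * s\<^sup>2 / 2 + 2 * s\<^sup>2 * z\<^sup>2"
      using zero_le_power2[of "s * z + s\<^sup>2 / 2"] by (simp add: power2_eq_square algebra_simps)
    moreover have "Phi (z - s) * (s * z - s\<^sup>2 / 2)\<^sup>2 \<le> (s * z - s\<^sup>2 / 2)\<^sup>2"
      using Phi_nonneg[of "z - s"] Phi_le_1[of "z - s"] by (simp add: mult_left_le_one_le)
    ultimately show ?thesis
      using Phi_nonneg[of "z - s"] by (simp add: abs_mult)
  qed
  have int2: "set_integrable lborel {a..} (\<lambda>z. phi z * Phi (z - s) * (s * z - s\<^sup>2 / 2) ^ 2)"
    unfolding mult.assoc by (rule set_integrable_phi_mult_quadratic[OF _ _ bound]) auto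
  have "(1 / s\<^sup>2 + 1 / 4) * Ik s (exp (s * a - s\<^sup>2 / 2)) 0
          - (1 / s\<^sup>2)\<^sup>2 * Ik s (exp (s * a - s\<^sup>2 / 2)) 2
      = (LINT z:{a..}|lborel. ((1 / s\<^sup>2 + 1 / 4) * s) * (phi z * Phi (z - s) * (s * z - s\<^sup>2 / 2) ^ 0)
           - ((1 / s\<^sup>2)\<^sup>2 * s) * (phi z * Phi (z - s) * (s * z - s\<^sup>2 / 2) ^ 2))"
    unfolding Ik_eq_tail_moment[OF assms] using int0 int2 by (subst set_integral_diff(2)) auto
  also have "\<dots> = (LINT z:{a..}|lborel. 1 / s * (phi z * Phi (z - s) * (1 + s * z - z\<^sup>2)))"
    using assms by (intro set_lebesgue_integral_cong) (auto simp: field_simps power2_eq_square)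
  finally show ?thesis
    by simp
qed

section \<open>The derivative of the profit\<close>

lemma integral_dominated_convergence_at:
  fixes q :: "real \<Rightarrow> 'a \<Rightarrow> real"
  assumes "\<And>t. q t \<in> borel_measurable M" "g \<in> borel_measurable M" "integrable M w"
    and lim: "AE x in M. ((\<lambda>t. q t x) \<longlongrightarrow> g x) (at t0)"
    and bound: "\<forall>\<^sub>F t in at t0. AE x in M. norm (q t x) \<le> w x"
  shows "((\<lambda>t. \<integral>x. q t x \<partial>M) \<longlongrightarrow> (\<integral>x. g x \<partial>M)) (at t0)"
  unfolding tendsto_at_iff_sequentially comp_def
proof (intro allI impI)
  fix X :: "nat \<Rightarrow> real"
  assume X: "\<forall>i. X i \<in> UNIV - {t0}" "X \<longlonglongrightarrow> t0"
  then have X_at: "filterlim X (at t0) sequentially"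
    by (simp add: filterlim_at eventually_sequentially)
  from filterlim_iff[THEN iffD1, OF this, rule_format, OF bound]
  obtain N where w: "\<And>n. N \<le> n \<Longrightarrow> AE x in M. norm (q (X n) x) \<le> w x"
    by (auto simp: eventually_sequentially)
  show "(\<lambda>n. \<integral>x. q (X n) x \<partial>M) \<longlonglongrightarrow> (\<integral>x. g x \<partial>M)"
  proof (rule LIMSEQ_offset, rule integral_dominated_convergence)
    show "AE x in M. norm (q (X (n + N)) x) \<le> w x" for n
      by (rule w) simp
    show "AE x in M. (\<lambda>n. q (X (n + N)) x) \<longlonglongrightarrow> g x"
      using lim
    proof eventually_elim
      fix x
      assume "((\<lambda>t. q t x) \<longlongrightarrow> g x) (at t0)"
      then have "(\<lambda>n. q (X n) x) \<longlonglongrightarrow> g x"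
        by (rule filterlim_compose[OF _ X_at])
      then show "(\<lambda>n. q (X (n + N)) x) \<longlonglongrightarrow> g x"
        by (rule LIMSEQ_ignore_initial_segment)
    qed
  qed (use assms in auto)
qed

lemma DERIV_integral_dominated:
  fixes k k' :: "real \<Rightarrow> 'a \<Rightarrow> real" and w :: "'a \<Rightarrow> real"
  assumes "\<delta> > 0"
    and der: "\<And>t y. \<bar>t - t0\<bar> < \<delta> \<Longrightarrow> ((\<lambda>t. k t y) has_real_derivative k' t y) (at t)"
    and meas: "\<And>t. k t \<in> borel_measurable M" "k' t0 \<in> borel_measurable M"
    and int: "\<And>t. \<bar>t - t0\<bar> < \<delta> \<Longrightarrow> integrable M (k t)" "integrable M w"
    and bound: "\<And>t y. \<bar>t - t0\<bar> < \<delta> \<Longrightarrow> \<bar>k' t y\<bar> \<le> w y"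
  shows "((\<lambda>t. \<integral>y. k t y \<partial>M) has_real_derivative (\<integral>y. k' t0 y \<partial>M)) (at t0)"
proof -
  have near: "\<forall>\<^sub>F t in at t0. t \<noteq> t0 \<and> \<bar>t - t0\<bar> < \<delta>"
    unfolding eventually_at by (intro exI[of _ \<delta>]) (simp add: \<open>\<delta> > 0\<close> dist_real_def)
  have "((\<lambda>t. \<integral>y. (k t y - k t0 y) / (t - t0) \<partial>M) \<longlongrightarrow> (\<integral>y. k' t0 y \<partial>M)) (at t0)"
  proof (rule integral_dominated_convergence_at[where w = w])
    show "AE y in M. ((\<lambda>t. (k t y - k t0 y) / (t - t0)) \<longlongrightarrow> k' t0 y) (at t0)"
      using der[of t0] \<open>\<delta> > 0\<close> by (simp add: has_field_derivative_iff)
    have quotient_le: "norm ((k t y - k t0 y) / (t - t0)) \<le> w y" if "\<bar>t - t0\<bar> < \<delta>" "t \<noteq> t0" for t y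
    proof -
      have "norm (k t y - k t0 y) \<le> w y * norm (t - t0)"
      proof (rule field_differentiable_bound[where f = "\<lambda>t. k t y" and S = "ball t0 \<delta>"])
        show "((\<lambda>t. k t y) has_field_derivative k' t y) (at t within ball t0 \<delta>)"
          if "t \<in> ball t0 \<delta>" for t
          using der[of t y] that by (simp add: dist_real_def abs_minus_commute has_field_derivative_at_within)
        show "norm (k' t y) \<le> w y" if "t \<in> ball t0 \<delta>" for t
          using bound[of t y] that by (simp add: dist_real_def abs_minus_commute)
      qed (use that \<open>\<delta> > 0\<close> in \<open>auto simp: dist_real_def abs_minus_commute\<close>)
      then show ?thesis
        using that(2) by (simp add: divide_le_eq)
    qed
    show "\<forall>\<^sub>F t in at t0. AE y in M. norm ((k t y - k t0 y) / (t - t0)) \<le> w y"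
      using quotient_le by (intro eventually_mono[OF near] AE_I2) auto
  qed (use meas int in auto)
  moreover have "\<forall>\<^sub>F t in at t0. (\<integral>y. (k t y - k t0 y) / (t - t0) \<partial>M)
      = ((\<integral>y. k t y \<partial>M) - (\<integral>y. k t0 y \<partial>M)) / (t - t0)"
    using int(1) \<open>\<delta> > 0\<close>
    by (intro eventually_mono[OF near]) (simp add: Bochner_Integration.integral_diff)
  ultimately show ?thesis
    unfolding has_field_derivative_iff by (rule Lim_transform_eventually)
qed

lemma tail_phi_Phi_eq_shifted:
  "tail_phi_Phi t a = (\<integral>y. indicator {0..} y * (phi (a + y) * Phi (a + y - t)) \<partial>lborel)"
  unfolding tail_phi_Phi_def by (rule set_integral_atLeast_shift)

lemma phi_le_gauss:
  assumes "\<bar>c\<bar> \<le> M"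
  shows "phi (c + y) \<le> exp (M\<^sup>2 / 2) * exp (- (y\<^sup>2) / 4)"
proof -
  have "c\<^sup>2 \<le> M\<^sup>2"
    using assms abs_ge_zero[of c] by (metis power2_abs power_mono)
  moreover have "0 \<le> (2 * c + y)\<^sup>2"
    by simp
  moreover have "(c + y)\<^sup>2 = c\<^sup>2 + 2 * c * y + y\<^sup>2" "(2 * c + y)\<^sup>2 = 4 * c\<^sup>2 + 4 * c * y + y\<^sup>2"
    by (simp_all add: power2_eq_square algebra_simps)
  ultimately have "- ((c + y)\<^sup>2) / 2 \<le> M\<^sup>2 / 2 + - (y\<^sup>2) / 4"
    by linarith
  then have "exp (- ((c + y)\<^sup>2) / 2) \<le> exp (M\<^sup>2 / 2) * exp (- (y\<^sup>2) / 4)"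
    by (simp add: exp_add[symmetric])
  moreover have "phi (c + y) \<le> exp (- ((c + y)\<^sup>2) / 2)"
    using pi_gt3 by (simp add: phi_altdef divide_le_eq)
  ultimately show ?thesis
    by linarith
qed

lemma integrable_gauss_linear:
  fixes A B :: real
  shows "integrable lborel (\<lambda>y. exp (- (y\<^sup>2) / 4) * (A + B * \<bar>y\<bar>))"
proof -
  have nd: "normal_density 0 (sqrt 2) y = exp (- (y\<^sup>2) / 4) / sqrt (4 * pi)" for y
    by (simp add: normal_density_def power_mult_distrib real_sqrt_mult)
  have "integrable lborel (\<lambda>y. normal_density 0 (sqrt 2) y * \<bar>y - 0\<bar> ^ k)" for k
    by (rule integrable_normal_moment_abs) simp
  from this[of 0] this[of 1]
  have "integrable lborel (\<lambda>y. (sqrt (4 * pi) * A) * (normal_density 0 (sqrt 2) y * \<bar>y - 0\<bar> ^ 0)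
      + (sqrt (4 * pi) * B) * (normal_density 0 (sqrt 2) y * \<bar>y - 0\<bar> ^ 1))"
    by auto
  then show ?thesis
    by (simp add: nd algebra_simps)
qed

lemma integrable_tail_integrand_shifted:
  "integrable lborel (\<lambda>y. indicator {0..} y * (phi (c + y) * Phi (c + y - t)))"
proof (rule Bochner_Integration.integrable_bound[OF integrable_gauss_linear[of "exp (\<bar>c\<bar>\<^sup>2 / 2)" 0]])
  show "AE y in lborel. norm (indicator {0..} y * (phi (c + y) * Phi (c + y - t)))
      \<le> norm (exp (- (y\<^sup>2) / 4) * (exp (\<bar>c\<bar>\<^sup>2 / 2) + 0 * \<bar>y\<bar>))"
  proof (intro AE_I2)
    fix y
    have "\<bar>indicator {0..} y * (phi (c + y) * Phi (c + y - t))\<bar> \<le> phi (c + y)"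
      using phi_pos[of "c + y"] Phi_nonneg[of "c + y - t"] Phi_le_1[of "c + y - t"]
      by (simp add: indicator_def abs_mult mult_left_le)
    then show "norm (indicator {0..} y * (phi (c + y) * Phi (c + y - t)))
        \<le> norm (exp (- (y\<^sup>2) / 4) * (exp (\<bar>c\<bar>\<^sup>2 / 2) + 0 * \<bar>y\<bar>))"
      using phi_le_gauss[of c "\<bar>c\<bar>" y] by (simp add: mult.commute)
  qed
qed measurable

lemma integral_tail_integrand_deriv:
  "(\<integral>y. indicator {0..} y * (phi (a + y) * (- (a + y) * \<alpha> * Phi (a + y - s)
                                              + phi (a + y - s) * (\<alpha> - 1))) \<partial>lborel)
   = - (\<alpha> * phi a * Phi (a - s)) - phi_conv s * (1 - Phi (sqrt 2 * (a - s / 2)))"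
proof -
  have "set_integrable lborel {a..} (\<lambda>z. phi z * phi (z - s))"
    using set_integrable_phi_shift_mult[of "\<lambda>z. phi (z - s)" "{a..}" 0] phi_pos phi_le_1
    by (simp add: less_imp_le)
  moreover have "set_integrable lborel {a..} (\<lambda>z. \<alpha> * (phi z * (- z * Phi (z - s) + phi (z - s))))"
    using set_integrable_deriv_phi_mult_Phi_shift by (rule set_integrable_mult_right)
  ultimately have "(LINT z:{a..}|lborel. \<alpha> * (phi z * (- z * Phi (z - s) + phi (z - s))) - phi z * phi (z - s))
      = \<alpha> * (LINT z:{a..}|lborel. phi z * (- z * Phi (z - s) + phi (z - s)))
        - (LINT z:{a..}|lborel. phi z * phi (z - s))"
    by (simp add: set_integral_diff(2) set_integral_mult_right)
  moreover have "(LINT z:{a..}|lborel. phi z * (- z * \<alpha> * Phi (z - s) + phi (z - s) * (\<alpha> - 1)))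
      = (LINT z:{a..}|lborel. \<alpha> * (phi z * (- z * Phi (z - s) + phi (z - s))) - phi z * phi (z - s))"
    by (rule set_lebesgue_integral_cong) (auto simp: algebra_simps)
  ultimately have "(LINT z:{a..}|lborel. phi z * (- z * \<alpha> * Phi (z - s) + phi (z - s) * (\<alpha> - 1)))
      = \<alpha> * (LINT z:{a..}|lborel. phi z * (- z * Phi (z - s) + phi (z - s)))
        - (LINT z:{a..}|lborel. phi z * phi (z - s))"
    by simp
  then show ?thesis
    unfolding set_integral_atLeast_shift[of a] set_integral_deriv_phi_mult_Phi_shift
      set_integral_phi_mult_phi_shift by simp
qed

lemma abs_tail_integrand_deriv_le:
  assumes "\<bar>c\<bar> \<le> M" "\<bar>\<alpha>\<bar> \<le> M'"
  shows "\<bar>phi (c + y) * (- (c + y) * \<alpha> * Phi (c + y - t) + phi (c + y - t) * (\<alpha> - 1))\<bar>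
           \<le> exp (M\<^sup>2 / 2) * exp (- (y\<^sup>2) / 4) * ((M + \<bar>y\<bar>) * M' + (M' + 1))"
proof -
  have "\<bar>(c + y) * \<alpha> * Phi (c + y - t)\<bar> \<le> \<bar>c + y\<bar> * \<bar>\<alpha>\<bar>"
    using Phi_nonneg[of "c + y - t"] Phi_le_1[of "c + y - t"] by (simp add: abs_mult mult_left_le)
  also have "\<dots> \<le> (M + \<bar>y\<bar>) * M'"
    using assms abs_triangle_ineq[of c y] by (intro mult_mono) auto
  finally have first: "\<bar>(c + y) * \<alpha> * Phi (c + y - t)\<bar> \<le> (M + \<bar>y\<bar>) * M'" .
  have "\<bar>phi (c + y - t) * (\<alpha> - 1)\<bar> \<le> \<bar>\<alpha> - 1\<bar>"
    using phi_pos[of "c + y - t"] phi_le_1[of "c + y - t"] by (simp add: abs_mult mult_left_le_one_le)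
  then have "\<bar>phi (c + y - t) * (\<alpha> - 1)\<bar> \<le> M' + 1"
    using assms(2) by linarith
  with first have "\<bar>- (c + y) * \<alpha> * Phi (c + y - t) + phi (c + y - t) * (\<alpha> - 1)\<bar>
      \<le> (M + \<bar>y\<bar>) * M' + (M' + 1)"
    by (smt (verit, best) abs_triangle_ineq minus_mult_left abs_minus_cancel)
  then show ?thesis
    using phi_le_gauss[OF assms(1), of y] phi_pos[of "c + y"]
    by (simp add: abs_mult mult_mono)
qed

lemma DERIV_tail_phi_Phi_moving_bounded:
  fixes A A' :: "real \<Rightarrow> real"
  assumes "d > 0" and der: "\<And>t. \<bar>t - s\<bar> < d \<Longrightarrow> (A has_real_derivative A' t) (at t)"
    and near: "\<And>t. \<bar>t - s\<bar> < d \<Longrightarrow> \<bar>A t\<bar> \<le> M \<and> \<bar>A' t\<bar> \<le> M'"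
  shows "((\<lambda>t. tail_phi_Phi t (A t)) has_real_derivative
           - (A' s * phi (A s) * Phi (A s - s)) - phi_conv s * (1 - Phi (sqrt 2 * (A s - s / 2)))) (at s)"
proof -
  txt \<open>Substituting \<open>z = A t + y\<close> moves the dependence on \<open>t\<close> out of the domain.\<close>
  define k where "k t y = indicator {0..} y * (phi (A t + y) * Phi (A t + y - t))" for t y
  define k' where "k' t y = indicator {0..} y * (phi (A t + y)
      * (- (A t + y) * A' t * Phi (A t + y - t) + phi (A t + y - t) * (A' t - 1)))" for t y
  define w where "w y = exp (- (y\<^sup>2) / 4) * (exp (M\<^sup>2 / 2) * (M * M' + M' + 1) + exp (M\<^sup>2 / 2) * M' * \<bar>y\<bar>)"
    for y
  have "((\<lambda>t. \<integral>y. k t y \<partial>lborel) has_real_derivative (\<integral>y. k' s y \<partial>lborel)) (at s)"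
  proof (rule DERIV_integral_dominated[OF \<open>d > 0\<close>])
    fix t y
    assume t: "\<bar>t - s\<bar> < d"
    show "((\<lambda>t. k t y) has_real_derivative k' t y) (at t)"
      using der[OF t] unfolding k_def k'_def by (auto intro!: derivative_eq_intros simp: algebra_simps)
    have "\<bar>k' t y\<bar> \<le> exp (M\<^sup>2 / 2) * exp (- (y\<^sup>2) / 4) * ((M + \<bar>y\<bar>) * M' + (M' + 1))"
      using abs_tail_integrand_deriv_le[of "A t" M "A' t" M' y t] near[OF t] exp_gt_zero
      by (auto simp: k'_def indicator_def)
    then show "\<bar>k' t y\<bar> \<le> w y"
      by (simp add: w_def algebra_simps)
    show "integrable lborel (k t)"
      unfolding k_def by (rule integrable_tail_integrand_shifted)
  next
    show "integrable lborel w"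
      unfolding w_def by (rule integrable_gauss_linear)
  qed (auto simp: k_def k'_def)
  moreover have "tail_phi_Phi t (A t) = (\<integral>y. k t y \<partial>lborel)" for t
    by (simp add: tail_phi_Phi_eq_shifted k_def)
  moreover have "(\<integral>y. k' s y \<partial>lborel)
      = - (A' s * phi (A s) * Phi (A s - s)) - phi_conv s * (1 - Phi (sqrt 2 * (A s - s / 2)))"
    unfolding k'_def by (rule integral_tail_integrand_deriv)
  ultimately show ?thesis
    by simp
qed

lemma DERIV_tail_phi_Phi_moving:
  fixes A A' :: "real \<Rightarrow> real"
  assumes "\<delta> > 0" and der: "\<And>t. \<bar>t - s\<bar> < \<delta> \<Longrightarrow> (A has_real_derivative A' t) (at t)"
    and "isCont A' s"
  shows "((\<lambda>t. tail_phi_Phi t (A t)) has_real_derivative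
           - (A' s * phi (A s) * Phi (A s - s)) - phi_conv s * (1 - Phi (sqrt 2 * (A s - s / 2)))) (at s)"
proof -
  have "isCont A s"
    using der[of s] \<open>\<delta> > 0\<close> DERIV_isCont by simp
  then obtain d1 where "d1 > 0" "\<And>t. \<bar>t - s\<bar> < d1 \<Longrightarrow> \<bar>A t - A s\<bar> < 1"
    unfolding continuous_at_eps_delta dist_real_def by (meson zero_less_one)
  moreover obtain d2 where "d2 > 0" "\<And>t. \<bar>t - s\<bar> < d2 \<Longrightarrow> \<bar>A' t - A' s\<bar> < 1"
    using \<open>isCont A' s\<close> unfolding continuous_at_eps_delta dist_real_def by (meson zero_less_one)
  ultimately show ?thesis
    using \<open>\<delta> > 0\<close> der
    by (intro DERIV_tail_phi_Phi_moving_bounded[where d = "min \<delta> (min d1 d2)"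
          and M = "\<bar>A s\<bar> + 1" and M' = "\<bar>A' s\<bar> + 1"]) force+
qed

lemma DERIV_tail_phi_Phi_zlow:
  assumes "s > 0" "0 < L" "L < 1"
  shows "((\<lambda>t. tail_phi_Phi t (zlow L t)) has_real_derivative
           - (vlow_s L s / (vlow_s L s - L) * phi (zlow L s) * Phi (zlow L s - s))
           - phi_conv s * (1 - Phi (sqrt 2 * (zlow L s - s / 2)))) (at s)"
proof (rule DERIV_tail_phi_Phi_moving[where A' = "\<lambda>t. vlow_s L t / (vlow_s L t - L)"])
    show "(zlow L has_real_derivative vlow_s L t / (vlow_s L t - L)) (at t)" if "\<bar>t - s\<bar> < s" for t
      using that DERIV_zlow[of t L] assms(2,3) by (simp add: abs_less_iff)
    show "isCont (\<lambda>t. vlow_s L t / (vlow_s L t - L)) s"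
      using isCont_vlow_s[OF assms] vlow_s_gt_L[OF assms] by (intro continuous_intros) auto
qed fact

lemma DERIV_profit_s:
  assumes "s > 0" "0 < L" "L < 1"
  defines "a \<equiv> zlow L s" and "\<alpha> \<equiv> vlow_s L s / (vlow_s L s - L)" and "lp \<equiv> ln L / s + s / 2"
  shows "(profit_s L has_real_derivative
           2 * phi_conv s * (1 - Phi (sqrt 2 * (a - s / 2))) + L * Phi a * phi lp
           + \<alpha> * phi a * (L * Phi lp - Phi (lp - s))) (at s)"
proof -
  have Phi_a_s: "Phi (a - s) = L * Phi a"
    using Phi_zlow_shift[OF assms(1-3)] by (simp add: a_def)
  have "vlow_s L s > L"
    using vlow_s_gt_L[OF assms(1-3)] .
  then have phi_a_s: "phi (a - s) * (\<alpha> - 1) = L * \<alpha> * phi a"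
    using phi_zlow_shift by (simp add: a_def \<alpha>_def field_simps)
  have phi_lp_s: "phi (lp - s) = L * phi lp"
    using phi_ln_shift[OF assms(1,2)] by (simp add: lp_def)
  have dA: "(zlow L has_real_derivative \<alpha>) (at s)"
    using DERIV_zlow[OF assms(1-3)] by (simp add: \<alpha>_def)
  note dK = DERIV_tail_phi_Phi_zlow[OF assms(1-3), folded a_def \<alpha>_def, unfolded Phi_a_s]
  have dPa: "((\<lambda>t. Phi (zlow L t)) has_real_derivative phi a * \<alpha>) (at s)"
    using dA by (auto intro!: derivative_eq_intros simp: a_def)
  have "((\<lambda>t. Phi (zlow L t - t)) has_real_derivative phi (a - s) * (\<alpha> - 1)) (at s)"
    using dA by (auto intro!: derivative_eq_intros simp: a_def)
  then have dPas: "((\<lambda>t. Phi (zlow L t - t)) has_real_derivative L * \<alpha> * phi a) (at s)"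
    by (simp only: phi_a_s)
  define lp' where "lp' = - (ln L / s\<^sup>2) + 1 / 2"
  have dlp: "((\<lambda>t. ln L / t + t / 2) has_real_derivative lp') (at s)"
    using assms(1) by (auto intro!: derivative_eq_intros simp: lp'_def power2_eq_square field_simps)
  have dPl: "((\<lambda>t. Phi (ln L / t + t / 2)) has_real_derivative phi lp * lp') (at s)"
    unfolding lp_def by (rule DERIV_Phi_comp[OF dlp])
  have "((\<lambda>t. Phi (ln L / t + t / 2 - t)) has_real_derivative phi (lp - s) * (lp' - 1)) (at s)"
    unfolding lp_def by (rule DERIV_Phi_comp[OF DERIV_diff[OF dlp DERIV_ident]])
  then have dPls: "((\<lambda>t. Phi (ln L / t + t / 2 - t)) has_real_derivative L * phi lp * (lp' - 1)) (at s)"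
    by (simp only: phi_lp_s)
  have "(profit_s L has_real_derivative
      0 - (L * \<alpha> * phi a * Phi a + phi a * \<alpha> * Phi (a - s))
      - 2 * (- (\<alpha> * phi a * (L * Phi a)) - phi_conv s * (1 - Phi (sqrt 2 * (a - s / 2))))
      + (L * \<alpha> * phi a * Phi lp + phi lp * lp' * Phi (a - s))
      - (phi a * \<alpha> * Phi (lp - s) + L * phi lp * (lp' - 1) * Phi a)) (at s)"
    unfolding profit_s_def[abs_def] a_def lp_def
    by (intro DERIV_add DERIV_diff DERIV_mult DERIV_cmult DERIV_const dPa[unfolded a_def]
        dPas[unfolded a_def] dK[unfolded a_def] dPl[unfolded lp_def] dPls[unfolded lp_def])
  then show ?thesis
    by (rule DERIV_cong) (simp add: Phi_a_s algebra_simps)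
qed

lemma profit_s_derivative_rearranged:
  assumes "s > 0" "0 < L" "L < 1"
  defines "a \<equiv> zlow L s" and "V \<equiv> vlow_s L s" and "lp \<equiv> ln L / s + s / 2"
  shows "(2 * phi_conv s * (1 - Phi (sqrt 2 * (a - s / 2))) + L * Phi a * phi lp
            + V / (V - L) * phi a * (L * Phi lp - Phi (lp - s))) / 2
       = Phi (a - s) * (phi lp / 2 + 1 / s * (a - s) * phi a)
         + V * phi a / (2 * (V - L)) * (L * Phi lp - Phi (lp - s))
         + 1 / (2 * sqrt 2) * (exp (- (s\<^sup>2) / 4) / sqrt (2 * pi))
             * (sqrt 2 / s * phi (sqrt 2 * (a - s / 2)) + 1 - Phi (sqrt 2 * (a - s / 2)))
         + ((1 / s\<^sup>2 + 1 / 4) * Ik s V 0 - (1 / s\<^sup>2)\<^sup>2 * Ik s V 2)"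
proof -
  have "V - L \<noteq> 0"
    using vlow_s_gt_L[OF assms(1-3)] by (simp add: V_def)
  have alg: "(2 * D * (1 - G) + L * P * pl + V / (V - L) * pa * Y) / 2
      = L * P * (pl / 2 + 1 / s * (a - s) * pa) + V * pa / (2 * (V - L)) * Y
        + 1 / (2 * r) * (r * D) * (r / s * g + 1 - G)
        + 1 / s * (D * (s / 2) - ((a - s) * pa * (L * P) + D * (g / r + s / 2 * G)))"
    if "r * r = 2" for D G P pl pa Y g r :: real
  proof -
    have "r \<noteq> 0" and rr: "r * (r * x) = 2 * x" for x
      using that by (auto simp: mult.assoc[symmetric])
    then show ?thesis
      using that assms(1) \<open>V - L \<noteq> 0\<close> by (simp add: field_simps) (simp add: algebra_simps rr)
  qed
  have "exp (- (s\<^sup>2) / 4) / sqrt (2 * pi) = sqrt 2 * phi_conv s"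
    by (simp add: phi_conv_def real_sqrt_mult field_simps)
  moreover have "(1 / s\<^sup>2 + 1 / 4) * Ik s V 0 - (1 / s\<^sup>2)\<^sup>2 * Ik s V 2
      = 1 / s * (phi_conv s * (s / 2) - ((a - s) * phi a * Phi (a - s)
          + phi_conv s * (phi (sqrt 2 * (a - s / 2)) / sqrt 2 + s / 2 * Phi (sqrt 2 * (a - s / 2)))))"
    using Ik_combination[OF assms(1), of a]
    by (simp add: V_def vlow_s_def a_def set_integral_phi_Phi_shift_quadratic)
  moreover have "Phi (a - s) = L * Phi a"
    using Phi_zlow_shift[OF assms(1-3)] by (simp add: a_def)
  ultimately show ?thesis
    by (simp only:) (rule alg, simp)
qed

lemma DERIV_PiB:
  assumes "\<sigma> > 0" "T > 0" "0 < L" "L < 1"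
  defines "s \<equiv> \<sigma> * sqrt T"
  defines "a \<equiv> zlow L s" and "V \<equiv> vlow_s L s" and "lp \<equiv> ln L / s + s / 2"
  shows "(PiB \<sigma> L has_real_derivative \<sigma> / sqrt T *
           ((2 * phi_conv s * (1 - Phi (sqrt 2 * (a - s / 2))) + L * Phi a * phi lp
              + V / (V - L) * phi a * (L * Phi lp - Phi (lp - s))) / 2)) (at T)"
proof -
  have "s > 0"
    using assms(1,2) by (simp add: s_def)
  have "((\<lambda>t. profit_s L (\<sigma> * sqrt t)) has_real_derivative
      (2 * phi_conv s * (1 - Phi (sqrt 2 * (a - s / 2))) + L * Phi a * phi lp
        + V / (V - L) * phi a * (L * Phi lp - Phi (lp - s))) * (\<sigma> * (inverse (sqrt T) / 2))) (at T)"
    using DERIV_profit_s[OF \<open>s > 0\<close> assms(3,4)] assms(2)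
    by (intro DERIV_chain2[where f = "profit_s L"]) 
       (auto intro!: derivative_eq_intros simp: s_def a_def V_def lp_def)
  moreover have "\<forall>\<^sub>F t in nhds T. PiB \<sigma> L t = profit_s L (\<sigma> * sqrt t)"
    using eventually_nhds_in_open[of "{0<..}" T] assms(2)
    by (auto elim!: eventually_mono simp: PiB_eq_profit_s[OF assms(1) _ assms(3,4)])
  ultimately show ?thesis
    by (subst DERIV_cong_ev[OF refl _ refl]) (auto simp: field_simps)
qed

lemma DERIV_PiB_formula:
  assumes "\<sigma> > 0" "T > 0" "0 < L" "L < 1"
  defines "s \<equiv> \<sigma> * sqrt T"
  defines "a \<equiv> zlow L s" and "V \<equiv> vlow_s L s" and "lp \<equiv> ln L / s + s / 2"
  shows "(PiB \<sigma> L has_real_derivative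
           Phi (a - s) * (\<sigma> / sqrt T) * (phi lp / 2 + (1 / s) * (a - s) * phi a)
           + \<sigma> * V * phi a / (2 * sqrt T * (V - L)) * (L * Phi lp - Phi (lp - s))
           + (1 / (2 * sqrt 2)) * (\<sigma> * exp (- \<sigma>\<^sup>2 * T / 4) / (sqrt (2 * pi) * sqrt T))
               * (sqrt 2 / s * phi (sqrt 2 * (a - s / 2)) + 1 - Phi (sqrt 2 * (a - s / 2)))
           + \<sigma> / sqrt T * (1 / (\<sigma>\<^sup>2 * T) + 1 / 4) * Ik s V 0
           - \<sigma> / sqrt T * (1 / (\<sigma>\<^sup>2 * T)\<^sup>2) * Ik s V 2) (at T)"
proof -
  have "s > 0"
    using assms(1,2) by (simp add: s_def)
  have factor: "P * (\<sigma> / q) * X1 + \<sigma> * v * f / (2 * q * (v - L)) * Y + k * (\<sigma> * e / (p * q)) * X3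
        + \<sigma> / q * m0 * I0 - \<sigma> / q * m2 * I2
      = \<sigma> / q * (P * X1 + v * f / (2 * (v - L)) * Y + k * (e / p) * X3 + (m0 * I0 - m2 * I2))"
    if "q \<noteq> 0" "v - L \<noteq> 0" "p \<noteq> 0" for P X1 v f Y k e p X3 m0 I0 m2 I2 q :: real
    using that by (simp add: field_simps)
  have sq: "\<sigma>\<^sup>2 * T = s\<^sup>2" "- \<sigma>\<^sup>2 * T / 4 = - (s\<^sup>2) / 4"
    using assms(2) by (simp_all add: s_def power_mult_distrib)
  have "V - L \<noteq> 0"
    using vlow_s_gt_L[OF \<open>s > 0\<close> assms(3,4)] by (simp add: V_def)
  from DERIV_PiB[OF assms(1-4), folded s_def, folded a_def V_def lp_def]
  show ?thesis
    unfolding profit_s_derivative_rearranged[OF \<open>s > 0\<close> assms(3,4), folded a_def V_def lp_def]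
      power_one_over sq
    by (rule DERIV_cong) (rule factor[symmetric], use assms(2) \<open>V - L \<noteq> 0\<close> in auto)
qed

theorem corollary3:
  fixes \<sigma> T L :: real
  assumes "\<sigma> > 0" and "T > 0" and "0 < L" and "L < 1"
  shows "let s = \<sigma> * sqrt T; vb = vlow \<sigma> L T;
             am = ln vb / s - s / 2; ap = ln vb / s + s / 2;
             lm = ln L / s - s / 2; lp = ln L / s + s / 2;
             I0 = Ik s vb 0; I2 = Ik s vb 2
         in PiB \<sigma> L T = 1 - Phi am * Phi ap - 2 / s * I0 + Phi am * Phi lp - Phi ap * Phi lm
          \<and> (PiB \<sigma> L has_real_derivative
               (Phi am * (\<sigma> / sqrt T) * (phi lp / 2 + (1 / s) * am * phi ap)
                + \<sigma> * vb * phi ap / (2 * sqrt T * (vb - L)) * (L * Phi lp - Phi lm)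
                + (1 / (2 * sqrt 2)) * (\<sigma> * exp (- \<sigma>\<^sup>2 * T / 4) / (sqrt (2 * pi) * sqrt T))
                    * (sqrt 2 / s * phi (sqrt 2 * ln vb / s) + 1 - Phi (sqrt 2 * ln vb / s))
                + \<sigma> / sqrt T * (1 / (\<sigma>\<^sup>2 * T) + 1 / 4) * I0
                - \<sigma> / sqrt T * (1 / (\<sigma>\<^sup>2 * T)\<^sup>2) * I2)) (at T)"
proof -
  define s where "s = \<sigma> * sqrt T"
  define a V lp where "a = zlow L s" and "V = vlow_s L s" and "lp = ln L / s + s / 2"
  have "s > 0"
    using assms(1,2) by (simp add: s_def)
  have vb: "vlow \<sigma> L T = V"
    using vlow_eq_vlow_s[OF assms] by (simp add: V_def s_def)
  have "ln V / s = a - s / 2"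
    using \<open>s > 0\<close> by (simp add: V_def vlow_s_def a_def field_simps power2_eq_square)
  then have coords: "ln V / s - s / 2 = a - s" "ln V / s + s / 2 = a"
    "sqrt 2 * ln V / s = sqrt 2 * (a - s / 2)" "ln L / s - s / 2 = lp - s"
    by (simp_all add: lp_def) (metis times_divide_eq_right)
  have "Ik s V 0 = s * tail_phi_Phi s a"
    using Ik_eq_tail_moment[OF \<open>s > 0\<close>, of a 0] by (simp add: V_def vlow_s_def a_def[symmetric] tail_phi_Phi_def)
  then have "PiB \<sigma> L T = 1 - Phi (a - s) * Phi a - 2 / s * Ik s V 0 + Phi (a - s) * Phi lp - Phi a * Phi (lp - s)"
    using PiB_closed_form[OF assms, folded s_def, folded a_def lp_def] \<open>s > 0\<close> by simp
  moreover note DERIV_PiB_formula[OF assms, folded s_def, folded a_def V_def lp_def]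
  ultimately show ?thesis
    unfolding Let_def s_def[symmetric] vb coords lp_def[symmetric] by blast
qed

end
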